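(* Let $0\le\underline\sigma\le\overline\sigma$ and let $\{X_i\}_{i\ge1}$ be a sequence with $X_i=V_i\eta_i$, where each $V_i\sim\mathcal M[\underline\sigma,\overline\sigma]$, each $\eta_i$ is classically distributed and standardized, and $V_i\dashrightarrow\eta_i$. Suppose the $X_i$ are semi-$G$-i.i.d., and have certain zero mean and uncertain variance with $\underline\sigma^2=-\hat{\mathbb E}[-X_1^2]\le\hat{\mathbb E}[X_1^2]=\overline\sigma^2$. Let $W\sim\hat N(0,[\underline\sigma^2,\overline\sigma^2])$. Then $\frac1{\sqrt n}\sum_{i=1}^nX_i$ converges in distribution to $W$; specifically, for every bounded continuous $\varphi:\mathbb R\to\mathbb R$, $$\lim_{n\to\infty}\hat{\mathbb E}\Big[\varphi\Big(\tfrac1{\sqrt n}\sum_{i=1}^nX_i\Big)\Big]=\hat{\mathbb E}[\varphi(W)].$$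
   Context: Sublinear expectation space $(\Omega,\mathcal H,\hat{\mathbb E})$ with $\hat{\mathbb E}[X]=\sup_{Q\in\mathcal P}E_Q[X]$ (monotone, constant-preserving, sub-additive, positively homogeneous). $C_{b,Lip}$: bounded Lipschitz functions; $C_{l.Lip}(\mathbb R^d)$: $|\varphi(x)-\varphi(y)|\le C(1+|x|^k+|y|^k)|x-y|$. $X\dashrightarrow Y$ ($Y$ independent from $X$) means $\hat{\mathbb E}[\varphi(X,Y)]=\hat{\mathbb E}[\hat{\mathbb E}[\varphi(x,Y)]_{x=X}]$ for all $\varphi\in C_{b,Lip}$; $X_1\dashrightarrow\cdots\dashrightarrow X_n$ means $(X_1,\dots,X_i)\dashrightarrow X_{i+1}$ for all $i$. $V\sim\mathcal M[\underline\sigma,\overline\sigma]$ means $\hat{\mathbb E}[\varphi(V)]=\max_{v\in[\underline\sigma,\overline\sigma]}\varphi(v)$ for $\varphi\in C_{l.Lip}$. A random variable $\eta$ is classically distributed if $\hat{\mathbb E}[\varphi(\eta)]=E_P[\varphi(\xi)]$ for a classical random variable $\xi$; it is standardized if $E_P[\xi]=0$, $E_P[\xi^2]=1$. $\epsilon\sim N(0,1)$ means this holds with $\xi$ standard normal. Semi-$G$-normal $W\sim\hat N(0,[\underline\sigma^2,\overline\sigma^2])$: $W=V\epsilon$ with $V\sim\mathcal M[\underline\sigma,\overline\sigma]$, $\epsilon\sim N(0,1)$, $V\dashrightarrow\epsilon$. Semi-$G$-independence of $X_1,\dots,X_n$ (with $X_i=V_i\eta_i$): $(V_1,\dots,V_n)\dashrightarrow(\eta_1,\dots,\eta_n)$,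 $V_1\dashrightarrow\cdots\dashrightarrow V_n$, and $\eta_1,\dots,\eta_n$ classically independent (their joint $\hat{\mathbb E}$ equals the classical expectation of independent copies). Semi-$G$-i.i.d.: identically distributed ($\hat{\mathbb E}[\varphi(X_i)]=\hat{\mathbb E}[\varphi(X_1)]$ for $\varphi\in C_{b,Lip}$) and semi-$G$-independent for every $n$. Certain zero mean: $\hat{\mathbb E}[X_1]=-\hat{\mathbb E}[-X_1]=0$. Convergence in distribution $Z_n\to Z$: $\hat{\mathbb E}[\varphi(Z_n)]\to\hat{\mathbb E}[\varphi(Z)]$ for all $\varphi\in C_{b,Lip}$. *)

theory Defs
  imports "HOL-Probability.Probability"
begin

text \<open>The sublinear expectation space is represented by a measurable space M (Omega with
its sigma-algebra) and a nonempty family P of probability measures on it;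
the sublinear expectation is the upper expectation sup over Q in P of E_Q.\<close>

definition sle_space :: "'w measure \<Rightarrow> 'w measure set \<Rightarrow> bool" where
  "sle_space M P \<longleftrightarrow> P \<noteq> {} \<and> (\<forall>Q\<in>P. prob_space Q \<and> sets Q = sets M)"

definition sexp :: "'w measure set \<Rightarrow> ('w \<Rightarrow> real) \<Rightarrow> real" where
  "sexp P X = (SUP Q\<in>P. integral\<^sup>L Q X)"

text \<open>Functions on R^n are represented as functions on real lists of length n.\<close>

definition list_dist :: "nat \<Rightarrow> real list \<Rightarrow> real list \<Rightarrow> real" where
  "list_dist n x y = sqrt (\<Sum>i<n. (x ! i - y ! i)^2)"

definition bLip :: "nat \<Rightarrow> (real list \<Rightarrow> real) \<Rightarrow> bool" where
  "bLip n \<phi> \<longleftrightarrow>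
     (\<exists>B. \<forall>x. length x = n \<longrightarrow> \<bar>\<phi> x\<bar> \<le> B) \<and>
     (\<exists>L. \<forall>x y. length x = n \<longrightarrow> length y = n \<longrightarrow> \<bar>\<phi> x - \<phi> y\<bar> \<le> L * list_dist n x y)"

definition bLip1 :: "(real \<Rightarrow> real) \<Rightarrow> bool" where
  "bLip1 \<phi> \<longleftrightarrow> (\<exists>B. \<forall>x. \<bar>\<phi> x\<bar> \<le> B) \<and> (\<exists>L. \<forall>x y. \<bar>\<phi> x - \<phi> y\<bar> \<le> L * \<bar>x - y\<bar>)"

definition lLip1 :: "(real \<Rightarrow> real) \<Rightarrow> bool" where
  "lLip1 \<phi> \<longleftrightarrow> (\<exists>C k. \<forall>x y. \<bar>\<phi> x - \<phi> y\<bar> \<le> C * (1 + \<bar>x\<bar>^k + \<bar>y\<bar>^k) * \<bar>x - y\<bar>)"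

definition rvec :: "('w \<Rightarrow> real) list \<Rightarrow> 'w \<Rightarrow> real list" where
  "rvec Xs w = map (\<lambda>X. X w) Xs"

text \<open>sl_indep P Xs Ys : the random vector Ys is independent from the random vector Xs.\<close>
definition sl_indep :: "'w measure set \<Rightarrow> ('w \<Rightarrow> real) list \<Rightarrow> ('w \<Rightarrow> real) list \<Rightarrow> bool" where
  "sl_indep P Xs Ys \<longleftrightarrow>
     (\<forall>\<phi>. bLip (length Xs + length Ys) \<phi> \<longrightarrow>
        sexp P (\<lambda>w. \<phi> (rvec Xs w @ rvec Ys w)) =
        sexp P (\<lambda>w. sexp P (\<lambda>w'. \<phi> (rvec Xs w @ rvec Ys w'))))"

definition maximal_dist :: "'w measure set \<Rightarrow> ('w \<Rightarrow> real) \<Rightarrow> real \<Rightarrow> real \<Rightarrow> bool" where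
  "maximal_dist P V a b \<longleftrightarrow>
     (\<forall>\<phi>. lLip1 \<phi> \<longrightarrow> sexp P (\<lambda>w. \<phi> (V w)) = (SUP v\<in>{a..b}. \<phi> v))"

definition classical_dist :: "'w measure set \<Rightarrow> ('w \<Rightarrow> real) \<Rightarrow> real measure \<Rightarrow> bool" where
  "classical_dist P \<eta> \<mu> \<longleftrightarrow> prob_space \<mu> \<and> sets \<mu> = sets borel \<and>
     (\<forall>\<phi>. bLip1 \<phi> \<longrightarrow> sexp P (\<lambda>w. \<phi> (\<eta> w)) = (\<integral>x. \<phi> x \<partial>\<mu>))"

definition standardized :: "real measure \<Rightarrow> bool" where
  "standardized \<mu> \<longleftrightarrow> integrable \<mu> (\<lambda>x. x) \<and> integrable \<mu> (\<lambda>x. x^2) \<and>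
     (\<integral>x. x \<partial>\<mu>) = 0 \<and> (\<integral>x. x^2 \<partial>\<mu>) = 1"

definition classical_indep :: "'w measure set \<Rightarrow> ('w \<Rightarrow> real) list \<Rightarrow> (nat \<Rightarrow> real measure) \<Rightarrow> bool" where
  "classical_indep P etas mus \<longleftrightarrow>
     (\<forall>\<phi>. bLip (length etas) \<phi> \<longrightarrow>
        sexp P (\<lambda>w. \<phi> (rvec etas w)) =
        (\<integral>x. \<phi> (map x [0..<length etas]) \<partial>(PiM {..<length etas} mus)))"

text \<open>W ~ semi-G-normal N(0,[a^2,b^2]) on the given space\<close>
definition semiG_normal :: "'w measure \<Rightarrow> 'w measure set \<Rightarrow> ('w \<Rightarrow> real) \<Rightarrow> real \<Rightarrow> real \<Rightarrow> bool" where
  "semiG_normal M P W a b \<longleftrightarrow>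
     (\<exists>V \<epsilon>. V \<in> borel_measurable M \<and> \<epsilon> \<in> borel_measurable M \<and>
        maximal_dist P V a b \<and>
        classical_dist P \<epsilon> (density lborel std_normal_density) \<and>
        sl_indep P [V] [\<epsilon>] \<and> (\<forall>w. W w = V w * \<epsilon> w))"

end

theory Submission
  imports Defs
begin

(* Every upper expectation in the theorem is reduced to classical integrals. Inf-convolutions
   approximate a bounded continuous test function from below by bounded Lipschitz ones, so the
   defining identities of maximal distributions, classical laws and independence extend from
   bounded Lipschitz to bounded continuous functions. Iterating the independence relations then
   gives E[phi(S_n / sqrt n)] = sup over v in [sl, su]^n of E_P[phi(sum_i v_i eta_i / sqrt n)]
   with classically independent eta_i, and E[phi(W)] = sup over s in [sl, su] of
   E_P[phi(s N)] with N standard normal.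

   Identical distribution of the X_i forces the eta_i to have a common law: for psi = l y^2 + h,
   sup over v of E[psi(v eta)] minus l su^2 tends to E[h(su eta)] as l grows, so these suprema
   determine the characteristic function of eta. Finally a central limit theorem for weighted
   sums with bounded weights, applied along subsequences on which the mean squares of the
   weights converge in the compact [sl^2, su^2], shows that the suprema converge. *)

lemma list_dist_nonneg: "0 \<le> list_dist m x y"
  by (simp add: list_dist_def sum_nonneg)

lemma list_dist_self: "list_dist m x x = 0"
  by (simp add: list_dist_def)

lemma list_dist_commute: "list_dist m x y = list_dist m y x"
  unfolding list_dist_def by (simp add: power2_commute)

lemma list_dist_triangle: "list_dist m x z \<le> list_dist m x y + list_dist m y z"
  using L2_set_triangle_ineq[of "\<lambda>i. x!i - y!i" "\<lambda>i. y!i - z!i" "{..<m}"]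
  by (simp add: list_dist_def L2_set_def)

lemma abs_nth_diff_le_list_dist: "i < m \<Longrightarrow> \<bar>x!i - y!i\<bar> \<le> list_dist m x y"
  using member_le_L2_set[of "{..<m}" i "\<lambda>i. \<bar>x!i - y!i\<bar>"]
  by (simp add: L2_set_def list_dist_def)

lemma list_dist_append_same:
  assumes "length v = n" "length v' = n"
  shows "list_dist (n + k) (v @ a) (v' @ a) = list_dist n v v'"
proof -
  have "(\<Sum>i<n+k. ((v @ a)!i - (v' @ a)!i)^2) = (\<Sum>i<n. ((v @ a)!i - (v' @ a)!i)^2)"
    by (rule sum.mono_neutral_right) (auto simp: nth_append assms)
  also have "\<dots> = (\<Sum>i<n. (v!i - v'!i)^2)"
    by (rule sum.cong) (auto simp: nth_append assms)
  finally show ?thesis by (simp add: list_dist_def)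
qed

lemma list_dist_snoc_same:
  assumes "length v = m"
  shows "list_dist (m + 1) (v @ [x]) (v @ [y]) = \<bar>x - y\<bar>"
proof -
  have "(\<Sum>i<m+1. ((v @ [x])!i - (v @ [y])!i)^2) = (\<Sum>i\<in>{m}. ((v @ [x])!i - (v @ [y])!i)^2)"
    by (rule sum.mono_neutral_right) (auto simp: nth_append assms)
  then show ?thesis using assms by (simp add: list_dist_def nth_append)
qed

lemma list_dist_singleton: "list_dist 1 [x] [y] = \<bar>x - y\<bar>"
  by (simp add: list_dist_def)

lemma rvec_length [simp]: "length (rvec Zs w) = length Zs"
  by (simp add: rvec_def)

lemma rvec_nth [simp]: "i < length Zs \<Longrightarrow> rvec Zs w ! i = (Zs ! i) w"
  by (simp add: rvec_def)

lemma rvec_append: "rvec (Xs @ Ys) w = rvec Xs w @ rvec Ys w"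
  by (simp add: rvec_def)

lemma rvec_const_append: "rvec (map (\<lambda>c _. c) v @ Ys) w = v @ rvec Ys w"
  by (simp add: rvec_def comp_def)

definition list_continuous :: "nat \<Rightarrow> (real list \<Rightarrow> real) \<Rightarrow> bool" where
  "list_continuous m f \<longleftrightarrow> (\<forall>x ys. length x = m \<longrightarrow> (\<forall>k. length (ys k) = m) \<longrightarrow>
      (\<lambda>k. list_dist m (ys k) x) \<longlonglongrightarrow> 0 \<longrightarrow> (\<lambda>k. f (ys k)) \<longlonglongrightarrow> f x)"

lemma list_continuousI:
  assumes "\<And>x ys. length x = m \<Longrightarrow> (\<And>k. length (ys k) = m) \<Longrightarrow>
      (\<And>i. i < m \<Longrightarrow> (\<lambda>k. ys k ! i) \<longlonglongrightarrow> x ! i) \<Longrightarrow> (\<lambda>k. f (ys k)) \<longlonglongrightarrow> f x"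
  shows "list_continuous m f"
proof -
  have "(\<lambda>k. ys k ! i) \<longlonglongrightarrow> x ! i"
    if "(\<lambda>k. list_dist m (ys k) x) \<longlonglongrightarrow> 0" "i < m" for x ys i
  proof -
    have "(\<lambda>k. ys k ! i - x ! i) \<longlonglongrightarrow> 0"
      by (rule Lim_null_comparison[OF _ that(1)])
         (use abs_nth_diff_le_list_dist[OF that(2)] in auto)
    then show ?thesis by (simp add: LIM_zero_iff)
  qed
  then show ?thesis
    unfolding list_continuous_def using assms by blast
qed

lemma list_continuous_compose:
  assumes "continuous_on UNIV \<phi>" and "list_continuous m g"
  shows "list_continuous m (\<lambda>l. \<phi> (g l))"
  unfolding list_continuous_def
proof (intro allI impI)
  fix x ys
  assume "length x = m" "\<forall>k. length (ys k) = m" "(\<lambda>k. list_dist m (ys k) x) \<longlonglongrightarrow> 0"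
  then have "(\<lambda>k. g (ys k)) \<longlonglongrightarrow> g x"
    using assms(2) unfolding list_continuous_def by blast
  moreover have "isCont \<phi> (g x)"
    using assms(1) continuous_on_eq_continuous_at open_UNIV by blast
  ultimately show "(\<lambda>k. \<phi> (g (ys k))) \<longlonglongrightarrow> \<phi> (g x)"
    using isCont_tendsto_compose by blast
qed

lemma bLip_imp_list_continuous:
  assumes "bLip m f"
  shows "list_continuous m f"
proof -
  from assms obtain L where L: "\<And>x y. length x = m \<Longrightarrow> length y = m \<Longrightarrow>
      \<bar>f x - f y\<bar> \<le> L * list_dist m x y"
    unfolding bLip_def by blast
  show ?thesis
    unfolding list_continuous_def
  proof (intro allI impI)
    fix x ys
    assume x: "length x = m" and ys: "\<forall>k. length (ys k) = m"
      and d: "(\<lambda>k. list_dist m (ys k) x) \<longlonglongrightarrow> 0"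
    have "(\<lambda>k. L * list_dist m (ys k) x) \<longlonglongrightarrow> 0"
      using tendsto_mult_right_zero[OF d] by simp
    then have "(\<lambda>k. f (ys k) - f x) \<longlonglongrightarrow> 0"
      by (rule Lim_null_comparison[rotated]) (use L x ys in auto)
    then show "(\<lambda>k. f (ys k)) \<longlonglongrightarrow> f x"
      by (simp add: LIM_zero_iff)
  qed
qed

lemma list_continuous_rvec_measurable:
  assumes f: "list_continuous m f" and len: "length Zs = m"
    and meas: "\<And>Z. Z \<in> set Zs \<Longrightarrow> Z \<in> borel_measurable M"
  shows "(\<lambda>w. f (rvec Zs w)) \<in> borel_measurable M"
proof -
  define z where "z w = (\<lambda>i::nat. if i < m then (Zs!i) w else 0)" for w
  have zm: "z \<in> borel_measurable M"
    unfolding z_def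
  proof (rule measurable_coordinatewise_then_product)
    fix i
    show "(\<lambda>x. if i < m then (Zs ! i) x else 0) \<in> borel_measurable M"
      using meas[of "Zs!i"] len by (cases "i < m") auto
  qed
  define G where "G y = f (map y [0..<m])" for y :: "nat \<Rightarrow> real"
  have "isCont G y" for y
  proof (unfold continuous_at_sequentially comp_def, intro allI impI)
    fix yk assume yk: "yk \<longlonglongrightarrow> y"
    have "(\<lambda>k. yk k i) \<longlonglongrightarrow> y i" for i
      using isCont_tendsto_compose[OF _ yk, of "\<lambda>x. x i"]
        continuous_on_product_coordinates[of i] continuous_on_eq_continuous_at[of UNIV]
      by blast
    then have "(\<lambda>k. list_dist m (map (yk k) [0..<m]) (map y [0..<m])) \<longlonglongrightarrow>
          sqrt (\<Sum>i<m. (y i - y i)^2)"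
      unfolding list_dist_def by (intro tendsto_intros) auto
    with f show "(\<lambda>k. G (yk k)) \<longlonglongrightarrow> G y"
      unfolding list_continuous_def G_def by auto
  qed
  then have "G \<in> borel_measurable borel"
    by (intro borel_measurable_continuous_onI continuous_at_imp_continuous_on) simp
  moreover have "f (rvec Zs w) = G (z w)" for w
  proof -
    have "rvec Zs w = map (z w) [0..<m]"
      by (rule nth_equalityI) (auto simp: len z_def)
    then show ?thesis by (simp add: G_def)
  qed
  ultimately show ?thesis
    using measurable_compose[OF zm] by (simp add: comp_def)
qed

section \<open>Lipschitz approximation from below\<close>

definition inf_convolution :: "nat \<Rightarrow> (real list \<Rightarrow> real) \<Rightarrow> nat \<Rightarrow> real list \<Rightarrow> real" where
  "inf_convolution m f k x = (INF y\<in>{y. length y = m}. f y + real k * list_dist m x y)"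

context
  fixes m :: nat and f :: "real list \<Rightarrow> real" and B :: real
  assumes f_bounded: "\<And>y. length y = m \<Longrightarrow> \<bar>f y\<bar> \<le> B"
begin

lemma inf_convolution_bdd_below:
  "bdd_below ((\<lambda>y. f y + real k * list_dist m x y) ` {y. length y = m})"
proof (rule bdd_belowI[of _ "-B"])
  fix z assume "z \<in> (\<lambda>y. f y + real k * list_dist m x y) ` {y. length y = m}"
  then obtain y where "length y = m" "z = f y + real k * list_dist m x y" by auto
  moreover have "real k * list_dist m x y \<ge> 0" by (simp add: list_dist_nonneg)
  ultimately show "-B \<le> z" using f_bounded[of y] by linarith
qed

lemma inf_convolution_lower:
  "length y = m \<Longrightarrow> inf_convolution m f k x \<le> f y + real k * list_dist m x y"
  unfolding inf_convolution_def by (rule cINF_lower[OF inf_convolution_bdd_below]) simp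

lemma inf_convolution_greatest:
  assumes "\<And>y. length y = m \<Longrightarrow> c \<le> f y + real k * list_dist m x y"
  shows "c \<le> inf_convolution m f k x"
  unfolding inf_convolution_def
  by (rule cINF_greatest) (use assms in \<open>auto intro!: exI[of _ "replicate m 0"]\<close>)

lemma inf_convolution_le: "length x = m \<Longrightarrow> inf_convolution m f k x \<le> f x"
  using inf_convolution_lower[of x k x] by (simp add: list_dist_self)

lemma inf_convolution_abs_le: "length x = m \<Longrightarrow> \<bar>inf_convolution m f k x\<bar> \<le> B"
  using inf_convolution_le[of x k] f_bounded[of x]
    inf_convolution_greatest[of "-B" k x] f_bounded list_dist_nonneg[of m x]
  by (smt (verit) mult_nonneg_nonneg of_nat_0_le_iff)

lemma inf_convolution_mono: "k \<le> k' \<Longrightarrow> inf_convolution m f k x \<le> inf_convolution m f k' x"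
  by (rule inf_convolution_greatest, rule order_trans[OF inf_convolution_lower])
     (auto intro!: mult_right_mono list_dist_nonneg)

lemma inf_convolution_bLip: "bLip m (inf_convolution m f k)"
proof -
  have "inf_convolution m f k x \<le> inf_convolution m f k x' + real k * list_dist m x x'" for x x'
  proof -
    have "inf_convolution m f k x - real k * list_dist m x x' \<le> inf_convolution m f k x'"
    proof (rule inf_convolution_greatest)
      fix y :: "real list" assume y: "length y = m"
      have "inf_convolution m f k x \<le> f y + real k * list_dist m x y"
        using inf_convolution_lower[OF y] .
      also have "\<dots> \<le> f y + real k * (list_dist m x x' + list_dist m x' y)"
        by (intro add_left_mono mult_left_mono list_dist_triangle) auto
      finally show "inf_convolution m f k x - real k * list_dist m x x' \<le> f y + real k * list_dist m x' y"
        by (simp add: algebra_simps)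
    qed
    then show ?thesis by simp
  qed
  then have "\<bar>inf_convolution m f k x - inf_convolution m f k y\<bar> \<le> real k * list_dist m x y" for x y
    by (smt (verit) list_dist_commute)
  then show ?thesis
    unfolding bLip_def using inf_convolution_abs_le by blast
qed

text \<open>A near-minimiser y_k of the k-th infimum satisfies k |x - y_k| \<le> 2B, so y_k \<rightarrow> x and
  continuity of f at x forces the infima up to f x.\<close>

lemma inf_convolution_exceeds:
  assumes f: "list_continuous m f" and x: "length x = m" and e: "e > 0"
  shows "\<exists>k. f x - e < inf_convolution m f k x"
proof (rule ccontr)
  assume "\<not> ?thesis"
  then have le: "inf_convolution m f k x \<le> f x - e" for k
    by (simp add: not_less)
  have "\<exists>y. length y = m \<and> f y + real k * list_dist m x y < f x - e/2" for k
  proof (rule ccontr)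
    assume "\<not> ?thesis"
    then have "f x - e/2 \<le> inf_convolution m f k x"
      by (intro inf_convolution_greatest) (simp add: not_less)
    then show False using le[of k] e by linarith
  qed
  then obtain ys where ys: "\<And>k. length (ys k) = m"
    "\<And>k. f (ys k) + real k * list_dist m x (ys k) < f x - e/2"
    by metis
  have bound: "list_dist m (ys k) x \<le> 2 * B / real k" if "k \<ge> 1" for k
  proof -
    have "real k * list_dist m x (ys k) \<le> 2 * B"
      using ys(2)[of k] f_bounded[OF ys(1)[of k]] f_bounded[OF x] e by linarith
    then show ?thesis using that by (simp add: field_simps list_dist_commute)
  qed
  have "(\<lambda>k. 2 * B / real k) \<longlonglongrightarrow> 0"
    by (intro tendsto_divide_0[OF tendsto_const]
        filterlim_real_sequentially[THEN filterlim_at_top_imp_at_infinity])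
  then have "(\<lambda>k. list_dist m (ys k) x) \<longlonglongrightarrow> 0"
  proof (rule Lim_null_comparison[rotated])
    show "\<forall>\<^sub>F k in sequentially. norm (list_dist m (ys k) x) \<le> 2 * B / real k"
      using eventually_ge_at_top[of 1]
      by eventually_elim (use bound list_dist_nonneg in auto)
  qed
  with f x ys(1) have lim: "(\<lambda>k. f (ys k)) \<longlonglongrightarrow> f x"
    unfolding list_continuous_def by blast
  have "f (ys k) \<le> f x - e/2" for k
  proof -
    have "0 \<le> real k * list_dist m x (ys k)"
      by (simp add: list_dist_nonneg)
    then show ?thesis
      using ys(2)[of k] by linarith
  qed
  then have "f x \<le> f x - e/2"
    by (intro tendsto_upperbound[OF lim]) auto
  then show False using e by simp
qed

lemma inf_convolution_tendsto:
  assumes f: "list_continuous m f" and x: "length x = m"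
  shows "(\<lambda>k. inf_convolution m f k x) \<longlonglongrightarrow> f x"
proof (rule LIMSEQ_I)
  fix r :: real assume "r > 0"
  then obtain K where K: "f x - r < inf_convolution m f K x"
    using inf_convolution_exceeds[OF f x] by blast
  have "norm (inf_convolution m f n x - f x) < r" if "K \<le> n" for n
    using K inf_convolution_mono[OF that, of x] inf_convolution_le[OF x, of n] by simp
  then show "\<exists>no. \<forall>n\<ge>no. norm (inf_convolution m f n x - f x) < r"
    by blast
qed

end

lemma prob_space_bounded_integrable:
  fixes f :: "'a \<Rightarrow> real"
  assumes "prob_space Q" "f \<in> borel_measurable Q" "\<And>w. \<bar>f w\<bar> \<le> B"
  shows "integrable Q f" "\<bar>integral\<^sup>L Q f\<bar> \<le> B"
proof -
  interpret prob_space Q by fact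
  show i: "integrable Q f"
    by (rule integrable_const_bound[where B=B]) (use assms in auto)
  have "\<bar>integral\<^sup>L Q f\<bar> \<le> integral\<^sup>L Q (\<lambda>x. \<bar>f x\<bar>)"
    by (rule integral_abs_bound)
  also have "\<dots> \<le> integral\<^sup>L Q (\<lambda>_. B)"
    by (rule integral_mono) (use assms i in auto)
  also have "\<dots> = B" by (simp add: prob_space)
  finally show "\<bar>integral\<^sup>L Q f\<bar> \<le> B" .
qed

lemma prob_space_bounded_convergence:
  fixes f :: "nat \<Rightarrow> 'a \<Rightarrow> real"
  assumes "prob_space Q" "\<And>k. f k \<in> borel_measurable Q" "g \<in> borel_measurable Q"
    "\<And>k w. \<bar>f k w\<bar> \<le> B" "\<And>w. (\<lambda>k. f k w) \<longlonglongrightarrow> g w"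
  shows "(\<lambda>k. integral\<^sup>L Q (f k)) \<longlonglongrightarrow> integral\<^sup>L Q g"
proof -
  interpret prob_space Q by fact
  show ?thesis
    by (rule integral_dominated_convergence[where w="\<lambda>_. B"]) (use assms in auto)
qed

lemma bdd_above_image_abs_le:
  fixes f :: "'a \<Rightarrow> real"
  shows "(\<And>c. c \<in> C \<Longrightarrow> \<bar>f c\<bar> \<le> B) \<Longrightarrow> bdd_above (f ` C)"
  by (intro bdd_aboveI[of _ B]) (auto simp: abs_le_iff)

lemma abs_SUP_le:
  fixes f :: "'a \<Rightarrow> real"
  assumes "C \<noteq> {}" "\<And>c. c \<in> C \<Longrightarrow> \<bar>f c\<bar> \<le> B"
  shows "\<bar>SUP c\<in>C. f c\<bar> \<le> B"
proof -
  obtain c where c: "c \<in> C" using assms(1) by auto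
  have "(SUP c\<in>C. f c) \<le> B"
    using assms by (intro cSUP_least) (auto simp: abs_le_iff)
  moreover have "f c \<le> (SUP c\<in>C. f c)"
    by (rule cSUP_upper[OF c bdd_above_image_abs_le[OF assms(2)]])
  ultimately show ?thesis using assms(2)[OF c] by (auto simp: abs_le_iff)
qed

lemma abs_SUP_diff_le:
  fixes f g :: "'a \<Rightarrow> real"
  assumes C: "C \<noteq> {}" and f: "\<And>c. c \<in> C \<Longrightarrow> \<bar>f c\<bar> \<le> B" and g: "\<And>c. c \<in> C \<Longrightarrow> \<bar>g c\<bar> \<le> B'"
    and d: "\<And>c. c \<in> C \<Longrightarrow> \<bar>f c - g c\<bar> \<le> D"
  shows "\<bar>(SUP c\<in>C. f c) - (SUP c\<in>C. g c)\<bar> \<le> D"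
proof -
  have le: "(SUP c\<in>C. p c) \<le> (SUP c\<in>C. q c) + D"
    if q: "bdd_above (q ` C)" and pq: "\<And>c. c \<in> C \<Longrightarrow> p c \<le> q c + D"
    for p q :: "'a \<Rightarrow> real"
  proof (rule cSUP_least[OF C])
    fix c assume c: "c \<in> C"
    show "p c \<le> (SUP c\<in>C. q c) + D"
      using pq[OF c] cSUP_upper[OF c q] by linarith
  qed
  have "f c \<le> g c + D" "g c \<le> f c + D" if "c \<in> C" for c
    using d[OF that] by (simp_all add: abs_le_iff)
  then show ?thesis
    using le[where p=f and q=g, OF bdd_above_image_abs_le[where f=g, OF g]]
      le[where p=g and q=f, OF bdd_above_image_abs_le[where f=f, OF f]]
    by (simp add: abs_le_iff)
qed

lemma SUP_image_pairs:
  fixes g :: "'c \<Rightarrow> real"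
  assumes C: "C \<noteq> {}" and I: "I \<noteq> {}"
    and g: "\<And>v u. v \<in> C \<Longrightarrow> u \<in> I \<Longrightarrow> \<bar>g (F v u)\<bar> \<le> B"
  shows "(SUP s\<in>{F v u | v u. v \<in> C \<and> u \<in> I}. g s) = (SUP v\<in>C. SUP u\<in>I. g (F v u))"
proof -
  let ?S = "{F v u | v u. v \<in> C \<and> u \<in> I}"
  have bS: "bdd_above (g ` ?S)"
    using g by (intro bdd_above_image_abs_le) auto
  have bI: "bdd_above ((\<lambda>u. g (F v u)) ` I)" if "v \<in> C" for v
    using g that by (intro bdd_above_image_abs_le) auto
  have bC: "bdd_above ((\<lambda>v. SUP u\<in>I. g (F v u)) ` C)"
    using g by (intro bdd_above_image_abs_le abs_SUP_le[OF I]) auto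
  show ?thesis
  proof (rule antisym)
    show "(SUP s\<in>?S. g s) \<le> (SUP v\<in>C. SUP u\<in>I. g (F v u))"
    proof (rule cSUP_least)
      fix s assume "s \<in> ?S"
      then obtain v u where vu: "v \<in> C" "u \<in> I" "s = F v u" by auto
      have "g (F v u) \<le> (SUP u\<in>I. g (F v u))" by (rule cSUP_upper[OF vu(2) bI[OF vu(1)]])
      also have "\<dots> \<le> (SUP v\<in>C. SUP u\<in>I. g (F v u))" by (rule cSUP_upper[OF vu(1) bC])
      finally show "g s \<le> (SUP v\<in>C. SUP u\<in>I. g (F v u))" using vu by simp
    qed (use C I in blast)
    show "(SUP v\<in>C. SUP u\<in>I. g (F v u)) \<le> (SUP s\<in>?S. g s)"
    proof (rule cSUP_least[OF C], rule cSUP_least[OF I])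
      fix v u assume "v \<in> C" "u \<in> I"
      then have "F v u \<in> ?S" by blast
      then show "g (F v u) \<le> (SUP s\<in>?S. g s)" by (rule cSUP_upper[OF _ bS])
    qed
  qed
qed

text \<open>No uniformity in v is needed: a single near-optimal v, whose sequence increases,
  controls all later suprema.\<close>

lemma SUP_incseq_tendsto:
  fixes a :: "nat \<Rightarrow> 'v \<Rightarrow> real"
  assumes C: "C \<noteq> {}"
    and inc: "\<And>k k' v. v \<in> C \<Longrightarrow> k \<le> k' \<Longrightarrow> a k v \<le> a k' v"
    and lim: "\<And>v. v \<in> C \<Longrightarrow> (\<lambda>k. a k v) \<longlonglongrightarrow> b v"
    and B: "\<And>k v. v \<in> C \<Longrightarrow> \<bar>a k v\<bar> \<le> B"
  shows "(\<lambda>k. SUP v\<in>C. a k v) \<longlonglongrightarrow> (SUP v\<in>C. b v)"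
proof -
  have bB: "\<bar>b v\<bar> \<le> B" if "v \<in> C" for v
    using B[OF that] by (intro tendsto_upperbound[OF tendsto_rabs[OF lim[OF that]]] always_eventually) auto
  have ab: "a k v \<le> b v" if "v \<in> C" for k v
    by (rule tendsto_lowerbound[OF lim[OF that]]) (auto intro!: eventually_sequentiallyI[of k] inc that)
  have bdda: "bdd_above ((\<lambda>v. a k v) ` C)" for k
    using B by (intro bdd_above_image_abs_le)
  have bddb: "bdd_above (b ` C)"
    using bB by (intro bdd_above_image_abs_le)
  have up: "(SUP v\<in>C. a k v) \<le> (SUP v\<in>C. b v)" for k
    by (rule cSUP_mono[OF C bddb]) (use ab in blast)
  have mono: "(SUP v\<in>C. a k v) \<le> (SUP v\<in>C. a k' v)" if "k \<le> k'" for k k'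
    by (rule cSUP_mono[OF C bdda]) (use inc that in blast)
  show ?thesis
  proof (rule LIMSEQ_I)
    fix r :: real assume r: "r > 0"
    then obtain v where v: "v \<in> C" "(SUP v\<in>C. b v) - r/2 < b v"
      using less_cSUP_iff[OF C bddb, of "(SUP v\<in>C. b v) - r/2"] by auto
    obtain K where K: "\<And>n. n \<ge> K \<Longrightarrow> norm (a n v - b v) < r/2"
      using lim[OF v(1)] r unfolding LIMSEQ_def dist_real_def by (metis half_gt_zero real_norm_def)
    have "norm ((SUP v\<in>C. a n v) - (SUP v\<in>C. b v)) < r" if n: "K \<le> n" for n
    proof -
      have "a K v \<le> (SUP v\<in>C. a n v)"
        using cSUP_upper[OF v(1) bdda] mono[OF n] by (rule order_trans)
      moreover have "b v - r/2 < a K v"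
        using abs_less_iff[THEN iffD1, OF K[OF order_refl, unfolded real_norm_def]] by linarith
      ultimately show ?thesis
        using v(2) up[of n] by (simp add: abs_less_iff)
    qed
    then show "\<exists>no. \<forall>n\<ge>no. norm ((SUP v\<in>C. a n v) - (SUP v\<in>C. b v)) < r"
      by blast
  qed
qed

context
  fixes M :: "'w measure" and P :: "'w measure set"
  assumes sle: "sle_space M P"
begin

lemma sle_nonempty: "P \<noteq> {}"
  using sle unfolding sle_space_def by auto

lemma sle_prob_space: "Q \<in> P \<Longrightarrow> prob_space Q"
  using sle unfolding sle_space_def by auto

lemma sle_sets_eq: "Q \<in> P \<Longrightarrow> sets Q = sets M"
  using sle unfolding sle_space_def by auto

lemma sle_measurable: "Q \<in> P \<Longrightarrow> f \<in> borel_measurable M \<Longrightarrow> f \<in> borel_measurable Q"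
  using measurable_cong_sets[OF sle_sets_eq refl] by blast

lemma sle_bounded_integrable:
  fixes f :: "'w \<Rightarrow> real"
  assumes "Q \<in> P" "f \<in> borel_measurable M" "\<And>w. \<bar>f w\<bar> \<le> B"
  shows "integrable Q f" "\<bar>integral\<^sup>L Q f\<bar> \<le> B"
  using prob_space_bounded_integrable[OF sle_prob_space[OF assms(1)] sle_measurable[OF assms(1,2)] assms(3)]
  by auto

lemma integral_le_sexp:
  assumes "f \<in> borel_measurable M" "\<And>w. \<bar>f w\<bar> \<le> B" "Q \<in> P"
  shows "integral\<^sup>L Q f \<le> sexp P f"
  unfolding sexp_def
  by (rule cSUP_upper[OF assms(3) bdd_above_image_abs_le])
     (rule sle_bounded_integrable(2)[OF _ assms(1,2)])

lemma sexp_le: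
  assumes "\<And>Q. Q \<in> P \<Longrightarrow> integral\<^sup>L Q f \<le> c"
  shows "sexp P f \<le> c"
  unfolding sexp_def by (rule cSUP_least[OF sle_nonempty assms])

lemma abs_sexp_le:
  assumes "f \<in> borel_measurable M" "\<And>w. \<bar>f w\<bar> \<le> B"
  shows "\<bar>sexp P f\<bar> \<le> B"
proof -
  obtain Q where Q: "Q \<in> P" using sle_nonempty by auto
  have "sexp P f \<le> B"
    by (rule sexp_le) (use sle_bounded_integrable(2)[OF _ assms] abs_le_D1 in blast)
  moreover have "-B \<le> sexp P f"
    using integral_le_sexp[OF assms Q] sle_bounded_integrable(2)[OF Q assms] by (auto simp: abs_le_iff)
  ultimately show ?thesis by auto
qed

lemma sexp_le_sexp_add:
  assumes f: "f \<in> borel_measurable M" "\<And>w. \<bar>f w\<bar> \<le> B"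
    and g: "g \<in> borel_measurable M" "\<And>w. \<bar>g w\<bar> \<le> B'"
    and le: "\<And>w. f w \<le> g w + C"
  shows "sexp P f \<le> sexp P g + C"
proof (rule sexp_le)
  fix Q assume Q: "Q \<in> P"
  interpret prob_space Q using sle_prob_space[OF Q] .
  have "integral\<^sup>L Q f \<le> integral\<^sup>L Q (\<lambda>w. g w + C)"
    by (rule integral_mono) (use sle_bounded_integrable(1)[OF Q f] sle_bounded_integrable(1)[OF Q g] le in auto)
  also have "\<dots> = integral\<^sup>L Q g + C"
    using sle_bounded_integrable(1)[OF Q g] by (simp add: prob_space)
  also have "\<dots> \<le> sexp P g + C"
    using integral_le_sexp[OF g Q] by simp
  finally show "integral\<^sup>L Q f \<le> sexp P g + C" .
qed

lemma sexp_mono: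
  assumes "f \<in> borel_measurable M" "\<And>w. \<bar>f w\<bar> \<le> B"
    "g \<in> borel_measurable M" "\<And>w. \<bar>g w\<bar> \<le> B'" "\<And>w. f w \<le> g w"
  shows "sexp P f \<le> sexp P g"
  using sexp_le_sexp_add[of f B g B' 0, OF assms(1-4)] assms(5) by simp

lemma abs_sexp_diff_le:
  assumes "f \<in> borel_measurable M" "\<And>w. \<bar>f w\<bar> \<le> B"
    "g \<in> borel_measurable M" "\<And>w. \<bar>g w\<bar> \<le> B'" "\<And>w. \<bar>f w - g w\<bar> \<le> C"
  shows "\<bar>sexp P f - sexp P g\<bar> \<le> C"
proof -
  have "f w \<le> g w + C" "g w \<le> f w + C" for w
    using assms(5)[of w] by (simp_all add: abs_le_iff)
  then show ?thesis
    using sexp_le_sexp_add[of f B g B' C] sexp_le_sexp_add[of g B' f B C] assms(1-4)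
    by (simp add: abs_le_iff)
qed

text \<open>Monotone convergence for the upper expectation: pick one Q \<in> P that nearly attains
  the supremum for the limit and apply bounded convergence under Q.\<close>

lemma sexp_incseq_tendsto:
  assumes fm: "\<And>k. f k \<in> borel_measurable M" and gm: "g \<in> borel_measurable M"
    and fB: "\<And>k w. \<bar>f k w\<bar> \<le> B"
    and inc: "\<And>k k' w. k \<le> k' \<Longrightarrow> f k w \<le> f k' w"
    and lim: "\<And>w. (\<lambda>k. f k w) \<longlonglongrightarrow> g w"
  shows "(\<lambda>k. sexp P (f k)) \<longlonglongrightarrow> sexp P g"
proof -
  have gB: "\<bar>g w\<bar> \<le> B" for w
    using fB by (intro tendsto_upperbound[OF tendsto_rabs[OF lim]] always_eventually) auto
  have fg: "f k w \<le> g w" for k w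
    by (rule tendsto_lowerbound[OF lim]) (auto intro!: eventually_sequentiallyI[of k] inc)
  have mono: "sexp P (f k) \<le> sexp P (f k')" if "k \<le> k'" for k k'
    by (rule sexp_mono[OF fm fB fm fB]) (use inc that in auto)
  have up: "sexp P (f k) \<le> sexp P g" for k
    by (rule sexp_mono[OF fm fB gm gB fg])
  show ?thesis
  proof (rule LIMSEQ_I)
    fix r :: real assume r: "r > 0"
    have "bdd_above ((\<lambda>Q. integral\<^sup>L Q g) ` P)"
      using sle_bounded_integrable(2)[OF _ gm gB] by (rule bdd_above_image_abs_le)
    moreover have "sexp P g - r/2 < sexp P g"
      using r by simp
    ultimately obtain Q where Q: "Q \<in> P" "sexp P g - r/2 < integral\<^sup>L Q g"
      unfolding sexp_def[of P g] by (subst (asm) less_cSUP_iff[OF sle_nonempty]) auto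
    have "(\<lambda>k. integral\<^sup>L Q (f k)) \<longlonglongrightarrow> integral\<^sup>L Q g"
      by (rule prob_space_bounded_convergence[OF sle_prob_space[OF Q(1)]
            sle_measurable[OF Q(1) fm] sle_measurable[OF Q(1) gm] fB lim])
    then obtain K where K: "\<And>n. n \<ge> K \<Longrightarrow> norm (integral\<^sup>L Q (f n) - integral\<^sup>L Q g) < r/2"
      using r unfolding LIMSEQ_def dist_real_def by (metis half_gt_zero real_norm_def)
    have "norm (sexp P (f n) - sexp P g) < r" if n: "K \<le> n" for n
    proof -
      have "integral\<^sup>L Q (f K) \<le> sexp P (f n)"
        using integral_le_sexp[OF fm fB Q(1)] mono[OF n] by (rule order_trans)
      moreover have "integral\<^sup>L Q g - r/2 < integral\<^sup>L Q (f K)"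
        using abs_less_iff[THEN iffD1, OF K[OF order_refl, unfolded real_norm_def]] by linarith
      ultimately show ?thesis
        using Q(2) up[of n] by (simp add: abs_less_iff)
    qed
    then show "\<exists>no. \<forall>n\<ge>no. norm (sexp P (f n) - sexp P g) < r"
      by blast
  qed
qed

lemma sexp_inf_convolution_tendsto:
  assumes fc: "list_continuous m f" and fB: "\<And>y. length y = m \<Longrightarrow> \<bar>f y\<bar> \<le> B"
    and len: "length Zs = m" and Zm: "\<And>Z. Z \<in> set Zs \<Longrightarrow> Z \<in> borel_measurable M"
  shows "(\<lambda>k. sexp P (\<lambda>w. inf_convolution m f k (rvec Zs w))) \<longlonglongrightarrow> sexp P (\<lambda>w. f (rvec Zs w))"
proof (rule sexp_incseq_tendsto)
  show "(\<lambda>w. inf_convolution m f k (rvec Zs w)) \<in> borel_measurable M" for k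
    by (rule list_continuous_rvec_measurable[OF bLip_imp_list_continuous[OF inf_convolution_bLip[OF fB]] len Zm])
  show "(\<lambda>w. f (rvec Zs w)) \<in> borel_measurable M"
    by (rule list_continuous_rvec_measurable[OF fc len Zm])
  show "\<bar>inf_convolution m f k (rvec Zs w)\<bar> \<le> B" for k w
    using inf_convolution_abs_le[OF fB] len by simp
  show "inf_convolution m f k (rvec Zs w) \<le> inf_convolution m f k' (rvec Zs w)" if "k \<le> k'" for k k' w
    using inf_convolution_mono[OF fB that] .
  show "(\<lambda>k. inf_convolution m f k (rvec Zs w)) \<longlonglongrightarrow> f (rvec Zs w)" for w
    using inf_convolution_tendsto[OF fB fc] len by simp
qed

end

lemma integral_inf_convolution_tendsto:
  assumes N: "prob_space N" and fc: "list_continuous m f" and fB: "\<And>y. length y = m \<Longrightarrow> \<bar>f y\<bar> \<le> B"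
    and len: "length Zs = m" and Zm: "\<And>Z. Z \<in> set Zs \<Longrightarrow> Z \<in> borel_measurable N"
  shows "(\<lambda>k. \<integral>x. inf_convolution m f k (rvec Zs x) \<partial>N) \<longlonglongrightarrow> (\<integral>x. f (rvec Zs x) \<partial>N)"
proof (rule prob_space_bounded_convergence[OF N])
  show "(\<lambda>w. inf_convolution m f k (rvec Zs w)) \<in> borel_measurable N" for k
    by (rule list_continuous_rvec_measurable[OF bLip_imp_list_continuous[OF inf_convolution_bLip[OF fB]] len Zm])
  show "(\<lambda>w. f (rvec Zs w)) \<in> borel_measurable N"
    by (rule list_continuous_rvec_measurable[OF fc len Zm])
  show "\<bar>inf_convolution m f k (rvec Zs w)\<bar> \<le> B" for k w
    using inf_convolution_abs_le[OF fB] len by simp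
  show "(\<lambda>k. inf_convolution m f k (rvec Zs w)) \<longlonglongrightarrow> f (rvec Zs w)" for w
    using inf_convolution_tendsto[OF fB fc] len by simp
qed

section \<open>Maximal distributions and independence\<close>

lemma bLip1_imp_lLip1: "bLip1 \<phi> \<Longrightarrow> lLip1 \<phi>"
  unfolding bLip1_def lLip1_def
proof (elim conjE exE)
  fix B L assume L: "\<forall>x y. \<bar>\<phi> x - \<phi> y\<bar> \<le> L * \<bar>x - y\<bar>"
  have "\<bar>\<phi> x - \<phi> y\<bar> \<le> \<bar>L\<bar> * (1 + \<bar>x\<bar> ^ 0 + \<bar>y\<bar> ^ 0) * \<bar>x - y\<bar>" for x y
  proof -
    have "\<bar>\<phi> x - \<phi> y\<bar> \<le> L * \<bar>x - y\<bar>" using L by blast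
    also have "\<dots> \<le> \<bar>L\<bar> * 3 * \<bar>x - y\<bar>" by (intro mult_right_mono) auto
    finally show ?thesis by simp
  qed
  then show "\<exists>C k. \<forall>x y. \<bar>\<phi> x - \<phi> y\<bar> \<le> C * (1 + \<bar>x\<bar> ^ k + \<bar>y\<bar> ^ k) * \<bar>x - y\<bar>"
    by blast
qed

lemma bLip_singleton_imp_bLip1: "bLip 1 g \<Longrightarrow> bLip1 (\<lambda>x. g [x])"
  unfolding bLip_def bLip1_def
  by (metis One_nat_def length_Cons list.size(3) list_dist_singleton)

lemma bLip_snoc_imp_bLip1:
  assumes "bLip (m + 1) g" "length v = m"
  shows "bLip1 (\<lambda>x. g (v @ [x]))"
proof -
  obtain B L where B: "\<And>x. length x = m + 1 \<Longrightarrow> \<bar>g x\<bar> \<le> B"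
    and L: "\<And>x y. length x = m + 1 \<Longrightarrow> length y = m + 1 \<Longrightarrow> \<bar>g x - g y\<bar> \<le> L * list_dist (m+1) x y"
    using assms(1) unfolding bLip_def by blast
  have "\<bar>g (v @ [x]) - g (v @ [y])\<bar> \<le> L * \<bar>x - y\<bar>" for x y
    using L[of "v @ [x]" "v @ [y]"] list_dist_snoc_same[OF assms(2)] assms(2) by simp
  moreover have "\<bar>g (v @ [x])\<bar> \<le> B" for x
    using B assms(2) by simp
  ultimately show ?thesis
    unfolding bLip1_def by blast
qed

lemma bLip_SUP_snoc:
  assumes "bLip (m + 1) g" "a \<le> b"
  shows "bLip m (\<lambda>v. SUP u\<in>{a..b}. g (v @ [u]))"
proof -
  obtain B L where B: "\<And>x. length x = m + 1 \<Longrightarrow> \<bar>g x\<bar> \<le> B"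
    and L: "\<And>x y. length x = m + 1 \<Longrightarrow> length y = m + 1 \<Longrightarrow> \<bar>g x - g y\<bar> \<le> L * list_dist (m+1) x y"
    using assms(1) unfolding bLip_def by blast
  have I: "{a..b} \<noteq> {}" using assms(2) by simp
  have B': "\<bar>g (u @ [x])\<bar> \<le> B" if "length u = m" for u x
    using B that by simp
  have "\<bar>(SUP u\<in>{a..b}. g (v @ [u])) - (SUP u\<in>{a..b}. g (v' @ [u]))\<bar> \<le> L * list_dist m v v'"
    if "length v = m" "length v' = m" for v v'
  proof (rule abs_SUP_diff_le[OF I B'[OF that(1)] B'[OF that(2)]])
    show "\<bar>g (v @ [x]) - g (v' @ [x])\<bar> \<le> L * list_dist m v v'" for x
      using L[of "v @ [x]" "v' @ [x]"] list_dist_append_same[OF that, of 1 "[x]"] that by simp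
  qed
  moreover have "\<bar>SUP u\<in>{a..b}. g (v @ [u])\<bar> \<le> B" if "length v = m" for v
    using B that by (intro abs_SUP_le[OF I]) auto
  ultimately show ?thesis
    unfolding bLip_def by blast
qed

lemma list_continuous_append_rvec_measurable:
  assumes f: "list_continuous (length v + length Ys) f"
    and Ym: "\<And>Y. Y \<in> set Ys \<Longrightarrow> Y \<in> borel_measurable M"
  shows "(\<lambda>w. f (v @ rvec Ys w)) \<in> borel_measurable M"
proof -
  have "(\<lambda>w. f (rvec (map (\<lambda>c _. c) v @ Ys) w)) \<in> borel_measurable M"
    by (rule list_continuous_rvec_measurable[OF f]) (use Ym in auto)
  then show ?thesis by (simp add: rvec_const_append)
qed

definition maximal_dist_on :: "'w measure set \<Rightarrow> ('w \<Rightarrow> real) list \<Rightarrow> real list set \<Rightarrow> bool" where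
  "maximal_dist_on P Vs C \<longleftrightarrow>
     (\<forall>g. bLip (length Vs) g \<longrightarrow> sexp P (\<lambda>w. g (rvec Vs w)) = (SUP v\<in>C. g v))"

lemma maximal_dist_on_singleton:
  assumes "maximal_dist P V a b"
  shows "maximal_dist_on P [V] ((\<lambda>v. [v]) ` {a..b})"
  unfolding maximal_dist_on_def
proof (intro allI impI)
  fix g :: "real list \<Rightarrow> real" assume "bLip (length [V]) g"
  then have "lLip1 (\<lambda>x. g [x])"
    by (intro bLip1_imp_lLip1 bLip_singleton_imp_bLip1) simp
  then have "sexp P (\<lambda>w. g [V w]) = (SUP v\<in>{a..b}. g [v])"
    using assms unfolding maximal_dist_def by blast
  then show "sexp P (\<lambda>w. g (rvec [V] w)) = (SUP v\<in>(\<lambda>v. [v]) ` {a..b}. g v)"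
    by (simp add: rvec_def image_comp comp_def)
qed

lemma maximal_dist_on_snoc:
  assumes Vs: "maximal_dist_on P Vs C" and C: "C \<noteq> {}" "C \<subseteq> {v. length v = length Vs}"
    and U: "maximal_dist P U a b" and ab: "a \<le> b"
    and ind: "sl_indep P Vs [U]"
  shows "maximal_dist_on P (Vs @ [U]) {v @ [u] | v u. v \<in> C \<and> u \<in> {a..b}}"
  unfolding maximal_dist_on_def
proof (intro allI impI)
  fix g assume g: "bLip (length (Vs @ [U])) g"
  define m where "m = length Vs"
  from g have g': "bLip (m + 1) g" by (simp add: m_def)
  then obtain B where B: "\<And>x. length x = m + 1 \<Longrightarrow> \<bar>g x\<bar> \<le> B"
    unfolding bLip_def by blast
  have inner: "sexp P (\<lambda>w'. g (v @ [U w'])) = (SUP u\<in>{a..b}. g (v @ [u]))" if "length v = m" for v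
    using U bLip1_imp_lLip1[OF bLip_snoc_imp_bLip1[OF g' that]] unfolding maximal_dist_def by blast
  have "sexp P (\<lambda>w. g (rvec (Vs @ [U]) w)) = sexp P (\<lambda>w. sexp P (\<lambda>w'. g (rvec Vs w @ rvec [U] w')))"
    using ind g unfolding sl_indep_def by (simp add: rvec_append)
  also have "\<dots> = sexp P (\<lambda>w. (SUP u\<in>{a..b}. g (rvec Vs w @ [u])))"
    using inner by (simp add: rvec_def m_def)
  also have "\<dots> = (SUP v\<in>C. SUP u\<in>{a..b}. g (v @ [u]))"
    using Vs bLip_SUP_snoc[OF g' ab] unfolding maximal_dist_on_def m_def by blast
  also have "\<dots> = (SUP s\<in>{v @ [u] | v u. v \<in> C \<and> u \<in> {a..b}}. g s)"
    by (rule SUP_image_pairs[where B=B and F="\<lambda>v u. v @ [u]", OF C(1), symmetric])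
       (use B C(2) ab m_def in force)+
  finally show "sexp P (\<lambda>w. g (rvec (Vs @ [U]) w)) = (SUP s\<in>{v @ [u] | v u. v \<in> C \<and> u \<in> {a..b}}. g s)" .
qed

context
  fixes M :: "'w measure" and P :: "'w measure set"
  assumes sle: "sle_space M P"
begin

lemma sexp_eq_integral_extend:
  assumes Zm: "\<And>Z. Z \<in> set Zs \<Longrightarrow> Z \<in> borel_measurable M" and lZ: "length Zs = n"
    and N: "prob_space N" and Ym: "\<And>Y. Y \<in> set Ys \<Longrightarrow> Y \<in> borel_measurable N" and lY: "length Ys = n"
    and bLip_eq: "\<And>g. bLip n g \<Longrightarrow> sexp P (\<lambda>w. g (rvec Zs w)) = (\<integral>x. g (rvec Ys x) \<partial>N)"
    and fc: "list_continuous n f" and fB: "\<And>y. length y = n \<Longrightarrow> \<bar>f y\<bar> \<le> B"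
  shows "sexp P (\<lambda>w. f (rvec Zs w)) = (\<integral>x. f (rvec Ys x) \<partial>N)"
proof -
  have "sexp P (\<lambda>w. inf_convolution n f k (rvec Zs w)) = (\<integral>x. inf_convolution n f k (rvec Ys x) \<partial>N)" for k
    by (rule bLip_eq[OF inf_convolution_bLip[OF fB]])
  then show ?thesis
    using LIMSEQ_unique sexp_inf_convolution_tendsto[OF sle fc fB lZ Zm]
      integral_inf_convolution_tendsto[OF N fc fB lY Ym]
    by simp
qed

lemma bLip_sexp_append:
  assumes \<psi>: "bLip (m + length Ys) \<psi>" and Ym: "\<And>Y. Y \<in> set Ys \<Longrightarrow> Y \<in> borel_measurable M"
  shows "bLip m (\<lambda>v. sexp P (\<lambda>w. \<psi> (v @ rvec Ys w)))"
proof -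
  obtain B L where B: "\<And>x. length x = m + length Ys \<Longrightarrow> \<bar>\<psi> x\<bar> \<le> B"
    and L: "\<And>x y. length x = m + length Ys \<Longrightarrow> length y = m + length Ys \<Longrightarrow>
      \<bar>\<psi> x - \<psi> y\<bar> \<le> L * list_dist (m + length Ys) x y"
    using \<psi> unfolding bLip_def by blast
  have meas: "(\<lambda>w. \<psi> (v @ rvec Ys w)) \<in> borel_measurable M" if "length v = m" for v
    by (rule list_continuous_append_rvec_measurable[OF bLip_imp_list_continuous Ym])
       (use \<psi> that in simp)
  have B': "\<bar>\<psi> (v @ rvec Ys w)\<bar> \<le> B" if "length v = m" for v w
    using B that by simp
  have "\<bar>sexp P (\<lambda>w. \<psi> (v @ rvec Ys w)) - sexp P (\<lambda>w. \<psi> (v' @ rvec Ys w))\<bar> \<le> L * list_dist m v v'"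
    if "length v = m" "length v' = m" for v v'
  proof (rule abs_sexp_diff_le[OF sle meas[OF that(1)] B'[OF that(1)] meas[OF that(2)] B'[OF that(2)]])
    show "\<bar>\<psi> (v @ rvec Ys w) - \<psi> (v' @ rvec Ys w)\<bar> \<le> L * list_dist m v v'" for w
      using L[of "v @ rvec Ys w" "v' @ rvec Ys w"] list_dist_append_same[OF that, of "length Ys" "rvec Ys w"] that
      by simp
  qed
  moreover have "\<bar>sexp P (\<lambda>w. \<psi> (v @ rvec Ys w))\<bar> \<le> B" if "length v = m" for v
    by (rule abs_sexp_le[OF sle meas[OF that] B'[OF that]])
  ultimately show ?thesis
    unfolding bLip_def by blast
qed

lemma sexp_indep_SUP_bLip:
  assumes Vs: "maximal_dist_on P Vs C" and ind: "sl_indep P Vs Ys"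
    and Ym: "\<And>Y. Y \<in> set Ys \<Longrightarrow> Y \<in> borel_measurable M"
    and \<psi>: "bLip (length Vs + length Ys) \<psi>"
  shows "sexp P (\<lambda>w. \<psi> (rvec Vs w @ rvec Ys w)) = (SUP v\<in>C. sexp P (\<lambda>w. \<psi> (v @ rvec Ys w)))"
proof -
  have "sexp P (\<lambda>w. \<psi> (rvec Vs w @ rvec Ys w)) = sexp P (\<lambda>w. sexp P (\<lambda>w'. \<psi> (rvec Vs w @ rvec Ys w')))"
    using ind \<psi> unfolding sl_indep_def by simp
  also have "\<dots> = (SUP v\<in>C. sexp P (\<lambda>w. \<psi> (v @ rvec Ys w)))"
    using Vs bLip_sexp_append[OF \<psi> Ym] unfolding maximal_dist_on_def by blast
  finally show ?thesis .
qed

lemma sexp_indep_SUP: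
  assumes Vs: "maximal_dist_on P Vs C" and C: "C \<noteq> {}" "C \<subseteq> {v. length v = length Vs}"
    and ind: "sl_indep P Vs Ys"
    and Vm: "\<And>Y. Y \<in> set Vs \<Longrightarrow> Y \<in> borel_measurable M"
    and Ym: "\<And>Y. Y \<in> set Ys \<Longrightarrow> Y \<in> borel_measurable M"
    and fc: "list_continuous (length Vs + length Ys) f"
    and fB: "\<And>y. length y = length Vs + length Ys \<Longrightarrow> \<bar>f y\<bar> \<le> B"
  shows "sexp P (\<lambda>w. f (rvec Vs w @ rvec Ys w)) = (SUP v\<in>C. sexp P (\<lambda>w. f (v @ rvec Ys w)))"
proof -
  let ?n = "length Vs + length Ys"
  define f\<^sub>k where "f\<^sub>k k = inf_convolution ?n f k" for k
  have bLip: "bLip ?n (f\<^sub>k k)" for k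
    unfolding f\<^sub>k_def by (rule inf_convolution_bLip[OF fB])
  have meas: "(\<lambda>w. f\<^sub>k k (v @ rvec Ys w)) \<in> borel_measurable M" if "v \<in> C" for k v
  proof (rule list_continuous_append_rvec_measurable[OF _ Ym])
    show "list_continuous (length v + length Ys) (f\<^sub>k k)"
      using bLip_imp_list_continuous[OF bLip] C(2) that by auto
  qed
  have bound: "\<bar>f\<^sub>k k (v @ rvec Ys w)\<bar> \<le> B" if "v \<in> C" for k v w
    using C(2) that inf_convolution_abs_le[OF fB] unfolding f\<^sub>k_def by auto
  have "(\<lambda>k. sexp P (\<lambda>w. f\<^sub>k k (rvec (Vs @ Ys) w))) \<longlonglongrightarrow> sexp P (\<lambda>w. f (rvec (Vs @ Ys) w))"
    unfolding f\<^sub>k_def by (rule sexp_inf_convolution_tendsto[OF sle fc fB]) (use Vm Ym in auto)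
  then have "(\<lambda>k. sexp P (\<lambda>w. f\<^sub>k k (rvec Vs w @ rvec Ys w))) \<longlonglongrightarrow> sexp P (\<lambda>w. f (rvec Vs w @ rvec Ys w))"
    by (simp add: rvec_append)
  moreover have "(\<lambda>k. SUP v\<in>C. sexp P (\<lambda>w. f\<^sub>k k (v @ rvec Ys w))) \<longlonglongrightarrow> (SUP v\<in>C. sexp P (\<lambda>w. f (v @ rvec Ys w)))"
  proof (rule SUP_incseq_tendsto[OF C(1)])
    fix v assume v: "v \<in> C"
    show "\<bar>sexp P (\<lambda>w. f\<^sub>k k (v @ rvec Ys w))\<bar> \<le> B" for k
      by (rule abs_sexp_le[OF sle meas[OF v] bound[OF v]])
    show "sexp P (\<lambda>w. f\<^sub>k k (v @ rvec Ys w)) \<le> sexp P (\<lambda>w. f\<^sub>k k' (v @ rvec Ys w))" if "k \<le> k'" for k k'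
      using inf_convolution_mono[OF fB that]
      by (intro sexp_mono[OF sle meas[OF v] bound[OF v] meas[OF v] bound[OF v]]) (simp add: f\<^sub>k_def)
    have "(\<lambda>k. sexp P (\<lambda>w. f\<^sub>k k (rvec (map (\<lambda>c _. c) v @ Ys) w)))
        \<longlonglongrightarrow> sexp P (\<lambda>w. f (rvec (map (\<lambda>c _. c) v @ Ys) w))"
      unfolding f\<^sub>k_def by (rule sexp_inf_convolution_tendsto[OF sle fc fB]) (use C(2) v Ym in auto)
    then show "(\<lambda>k. sexp P (\<lambda>w. f\<^sub>k k (v @ rvec Ys w))) \<longlonglongrightarrow> sexp P (\<lambda>w. f (v @ rvec Ys w))"
      by (simp add: rvec_const_append)
  qed
  moreover have "sexp P (\<lambda>w. f\<^sub>k k (rvec Vs w @ rvec Ys w)) = (SUP v\<in>C. sexp P (\<lambda>w. f\<^sub>k k (v @ rvec Ys w)))" for k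
    by (rule sexp_indep_SUP_bLip[OF Vs ind Ym bLip])
  ultimately show ?thesis
    using LIMSEQ_unique by simp
qed

end

definition cube :: "nat \<Rightarrow> real \<Rightarrow> real \<Rightarrow> real list set" where
  "cube n a b = {v. length v = n \<and> set v \<subseteq> {a..b}}"

lemma cube_1: "cube 1 a b = (\<lambda>v. [v]) ` {a..b}"
  unfolding cube_def by (auto simp: length_Suc_conv)

lemma cube_Suc: "cube (Suc n) a b = {v @ [u] | v u. v \<in> cube n a b \<and> u \<in> {a..b}}"
proof (rule set_eqI)
  fix v
  show "v \<in> cube (Suc n) a b \<longleftrightarrow> v \<in> {v @ [u] | v u. v \<in> cube n a b \<and> u \<in> {a..b}}"
    unfolding cube_def by (cases v rule: rev_cases) auto
qed

lemma cube_nonempty: "a \<le> b \<Longrightarrow> cube n a b \<noteq> {}"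
  unfolding cube_def by (auto intro!: exI[of _ "replicate n a"])

lemma cube_abs_nth_le:
  assumes "v \<in> cube n a b" "i < n" "0 \<le> a"
  shows "\<bar>v ! i\<bar> \<le> b"
proof -
  have "set v \<subseteq> {a..b}" "i < length v"
    using assms(1,2) unfolding cube_def by auto
  then have "v ! i \<in> {a..b}"
    by (metis nth_mem subsetD)
  then show ?thesis using assms(3) by auto
qed

lemma maximal_dist_on_cube:
  assumes ab: "a \<le> b"
    and V: "\<And>i. i \<ge> 1 \<Longrightarrow> maximal_dist P (V i) a b"
    and ind: "\<And>i. i \<ge> 1 \<Longrightarrow> sl_indep P (map V [1..<i+1]) [V (i+1)]"
  shows "maximal_dist_on P (map V [1..<n+2]) (cube (n+1) a b)"
proof (induction n)
  case 0
  then show ?case using maximal_dist_on_singleton[OF V[of 1]] cube_1[of a b] by simp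
next
  case (Suc n)
  have "maximal_dist_on P (map V [1..<n+2] @ [V (n+2)]) {v @ [u] | v u. v \<in> cube (n+1) a b \<and> u \<in> {a..b}}"
    using ind[of "n+1"] cube_nonempty[OF ab]
    by (intro maximal_dist_on_snoc[OF Suc _ _ V ab]) (auto simp: cube_def numeral_2_eq_2)
  then show ?case
    using cube_Suc[of "n+1" a b] by simp
qed

section \<open>Representation by classical integrals\<close>

definition upper_scale_integral :: "real \<Rightarrow> real \<Rightarrow> real measure \<Rightarrow> (real \<Rightarrow> real) \<Rightarrow> real" where
  "upper_scale_integral a b \<nu> \<phi> = (SUP v\<in>{a..b}. \<integral>x. \<phi> (v * x) \<partial>\<nu>)"

definition upper_weighted_sum_integral ::
    "real \<Rightarrow> real \<Rightarrow> (nat \<Rightarrow> real measure) \<Rightarrow> (real \<Rightarrow> real) \<Rightarrow> nat \<Rightarrow> real" where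
  "upper_weighted_sum_integral a b \<mu> \<phi> n =
     (SUP v\<in>cube n a b. \<integral>x. \<phi> ((\<Sum>i<n. v!i * x i) / sqrt (real n)) \<partial>(PiM {..<n} \<mu>))"

context
  fixes M :: "'w measure" and P :: "'w measure set"
  assumes sle: "sle_space M P"
begin

lemma sexp_scaled_classical:
  assumes \<epsilon>: "classical_dist P \<epsilon> \<nu>" "\<epsilon> \<in> borel_measurable M"
    and fc: "continuous_on UNIV \<phi>" and fB: "\<And>x. \<bar>\<phi> x\<bar> \<le> B"
  shows "sexp P (\<lambda>w. \<phi> (c * \<epsilon> w)) = (\<integral>x. \<phi> (c * x) \<partial>\<nu>)"
proof -
  have \<nu>: "prob_space \<nu>" "sets \<nu> = sets borel"
    using \<epsilon>(1) unfolding classical_dist_def by auto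
  have "sexp P (\<lambda>w. \<phi> (c * rvec [\<epsilon>] w ! 0)) = (\<integral>x. \<phi> (c * rvec [\<lambda>x. x] x ! 0) \<partial>\<nu>)"
  proof (rule sexp_eq_integral_extend[OF sle _ _ \<nu>(1), where B=B])
    show "list_continuous 1 (\<lambda>l. \<phi> (c * l ! 0))"
      by (intro list_continuous_compose[OF fc] list_continuousI) (auto intro!: tendsto_intros)
    show "Y \<in> borel_measurable \<nu>" if "Y \<in> set [\<lambda>x. x]" for Y
      using that unfolding measurable_cong_sets[OF \<nu>(2) refl] by simp
    fix g :: "real list \<Rightarrow> real" assume "bLip 1 g"
    then have "sexp P (\<lambda>w. g [\<epsilon> w]) = (\<integral>x. g [x] \<partial>\<nu>)"
      using \<epsilon>(1) bLip_singleton_imp_bLip1 unfolding classical_dist_def by blast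
    then show "sexp P (\<lambda>w. g (rvec [\<epsilon>] w)) = (\<integral>x. g (rvec [\<lambda>x. x] x) \<partial>\<nu>)"
      by (simp add: rvec_def)
  qed (use \<epsilon>(2) fB in auto)
  then show ?thesis by simp
qed

lemma sexp_maximal_times_classical:
  assumes V: "maximal_dist P V a b" "V \<in> borel_measurable M" and ab: "a \<le> b"
    and \<epsilon>: "classical_dist P \<epsilon> \<nu>" "\<epsilon> \<in> borel_measurable M" and ind: "sl_indep P [V] [\<epsilon>]"
    and fc: "continuous_on UNIV \<phi>" and fB: "\<And>x. \<bar>\<phi> x\<bar> \<le> B"
  shows "sexp P (\<lambda>w. \<phi> (V w * \<epsilon> w)) = upper_scale_integral a b \<nu> \<phi>"
proof -
  let ?f = "\<lambda>l. \<phi> (l!0 * l!1)"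
  have "sexp P (\<lambda>w. ?f (rvec [V] w @ rvec [\<epsilon>] w)) =
        (SUP v\<in>(\<lambda>v. [v]) ` {a..b}. sexp P (\<lambda>w. ?f (v @ rvec [\<epsilon>] w)))"
  proof (rule sexp_indep_SUP[OF sle maximal_dist_on_singleton[OF V(1)] _ _ ind, where B=B])
    show "list_continuous (length [V] + length [\<epsilon>]) ?f"
      by (intro list_continuous_compose[OF fc] list_continuousI) (auto intro!: tendsto_intros)
  qed (use ab V(2) \<epsilon>(2) fB in auto)
  also have "\<dots> = (SUP v\<in>{a..b}. sexp P (\<lambda>w. \<phi> (v * \<epsilon> w)))"
    by (simp add: image_comp comp_def rvec_def)
  also have "\<dots> = upper_scale_integral a b \<nu> \<phi>"
    unfolding upper_scale_integral_def using sexp_scaled_classical[OF \<epsilon> fc fB] by simp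
  finally show ?thesis by (simp add: rvec_def)
qed

lemma sexp_indep_weighted_sum:
  assumes Vs: "maximal_dist_on P Vs C" and C: "C \<noteq> {}" "C \<subseteq> {v. length v = n}"
    and len: "length Vs = n" "length Ys = n"
    and ind: "sl_indep P Vs Ys" and Ys: "classical_indep P Ys \<mu>"
    and \<mu>: "\<And>j. prob_space (\<mu> j)" "\<And>j. sets (\<mu> j) = sets borel"
    and Vm: "\<And>Y. Y \<in> set Vs \<Longrightarrow> Y \<in> borel_measurable M"
    and Ym: "\<And>Y. Y \<in> set Ys \<Longrightarrow> Y \<in> borel_measurable M"
    and fc: "continuous_on UNIV \<phi>" and fB: "\<And>x. \<bar>\<phi> x\<bar> \<le> B"
  shows "sexp P (\<lambda>w. \<phi> ((\<Sum>i<n. (Vs!i) w * (Ys!i) w) / sqrt (real n))) =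
         (SUP v\<in>C. \<integral>x. \<phi> ((\<Sum>i<n. v!i * x i) / sqrt (real n)) \<partial>(PiM {..<n} \<mu>))"
proof -
  let ?f = "\<lambda>l. \<phi> ((\<Sum>i<n. l!i * l!(n+i)) / sqrt (real n))"
  have "sexp P (\<lambda>w. ?f (rvec Vs w @ rvec Ys w)) = (SUP v\<in>C. sexp P (\<lambda>w. ?f (v @ rvec Ys w)))"
  proof (rule sexp_indep_SUP[OF sle Vs C(1) _ ind Vm Ym, where B=B])
    show "list_continuous (length Vs + length Ys) ?f"
      using len by (intro list_continuous_compose[OF fc] list_continuousI)
        (cases "n = 0"; auto intro!: tendsto_intros)
  qed (use C len fB in auto)
  moreover have "?f (rvec Vs w @ rvec Ys w) = \<phi> ((\<Sum>i<n. (Vs!i) w * (Ys!i) w) / sqrt (real n))" for w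
    using len by (simp add: nth_append)
  moreover have "sexp P (\<lambda>w. ?f (v @ rvec Ys w)) = (\<integral>x. \<phi> ((\<Sum>i<n. v!i * x i) / sqrt (real n)) \<partial>(PiM {..<n} \<mu>))"
    if v: "v \<in> C" for v
  proof -
    let ?g = "\<lambda>l. \<phi> ((\<Sum>i<n. v!i * l!i) / sqrt (real n))"
    let ?coords = "map (\<lambda>i (x :: nat \<Rightarrow> real). x i) [0..<n]"
    have "?f (v @ rvec Ys w) = ?g (rvec Ys w)" for w
      using v C len by (auto simp: nth_append)
    moreover have "sexp P (\<lambda>w. ?g (rvec Ys w)) = (\<integral>x. ?g (rvec ?coords x) \<partial>(PiM {..<n} \<mu>))"
    proof (rule sexp_eq_integral_extend[OF sle Ym len(2) prob_space_PiM, where B=B])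
      show "list_continuous n ?g"
        by (intro list_continuous_compose[OF fc] list_continuousI) (cases "n = 0"; auto intro!: tendsto_intros)
      show "Y \<in> borel_measurable (PiM {..<n} \<mu>)" if Y: "Y \<in> set ?coords" for Y
      proof -
        obtain i where i: "i < n" "Y = (\<lambda>x. x i)"
          using Y by auto
        have "(\<lambda>x. x i) \<in> measurable (PiM {..<n} \<mu>) (\<mu> i)"
          by (rule measurable_component_singleton) (use i in auto)
        then show ?thesis
          using i measurable_cong_sets[OF refl \<mu>(2)[of i]] by blast
      qed
      show "sexp P (\<lambda>w. g (rvec Ys w)) = (\<integral>x. g (rvec ?coords x) \<partial>(PiM {..<n} \<mu>))" if "bLip n g" for g
        using Ys len(2) that unfolding classical_indep_def by (simp add: rvec_def comp_def)
    qed (use \<mu> fB in auto)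
    ultimately show ?thesis by (simp add: rvec_def)
  qed
  ultimately show ?thesis by simp
qed

lemma sexp_semiG_normal:
  assumes W: "semiG_normal M P W a b" and ab: "a \<le> b"
    and fc: "continuous_on UNIV \<phi>" and fB: "\<And>x. \<bar>\<phi> x\<bar> \<le> B"
  shows "sexp P (\<lambda>w. \<phi> (W w)) = upper_scale_integral a b std_normal_distribution \<phi>"
proof -
  obtain V \<epsilon> where "V \<in> borel_measurable M" "\<epsilon> \<in> borel_measurable M" "maximal_dist P V a b"
    "classical_dist P \<epsilon> std_normal_distribution" "sl_indep P [V] [\<epsilon>]" "\<And>w. W w = V w * \<epsilon> w"
    using W unfolding semiG_normal_def by blast
  then show ?thesis
    using sexp_maximal_times_classical[OF _ _ ab _ _ _ fc fB] by simp
qed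

lemma sexp_eq_of_bLip1_eq:
  assumes X: "X \<in> borel_measurable M" and Y: "Y \<in> borel_measurable M"
    and eq: "\<And>\<phi>. bLip1 \<phi> \<Longrightarrow> sexp P (\<lambda>w. \<phi> (X w)) = sexp P (\<lambda>w. \<phi> (Y w))"
    and fc: "continuous_on UNIV \<psi>" and fB: "\<And>x. \<bar>\<psi> x\<bar> \<le> B"
  shows "sexp P (\<lambda>w. \<psi> (X w)) = sexp P (\<lambda>w. \<psi> (Y w))"
proof -
  let ?f = "\<lambda>l. \<psi> (l!0)"
  have f: "list_continuous 1 ?f"
    by (intro list_continuous_compose[OF fc] list_continuousI) auto
  have lim: "(\<lambda>k. sexp P (\<lambda>w. inf_convolution 1 ?f k (rvec [Z] w))) \<longlonglongrightarrow> sexp P (\<lambda>w. ?f (rvec [Z] w))"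
    if "Z \<in> borel_measurable M" for Z
    by (rule sexp_inf_convolution_tendsto[OF sle f, where B=B]) (use that fB in auto)
  have "bLip1 (\<lambda>x. inf_convolution 1 ?f k [x])" for k
    by (rule bLip_singleton_imp_bLip1 inf_convolution_bLip)+ (use fB in auto)
  then have "sexp P (\<lambda>w. inf_convolution 1 ?f k (rvec [X] w)) = sexp P (\<lambda>w. inf_convolution 1 ?f k (rvec [Y] w))" for k
    using eq[of "\<lambda>x. inf_convolution 1 ?f k [x]"] by (simp add: rvec_def)
  then show ?thesis
    using LIMSEQ_unique[OF lim[OF X]] lim[OF Y] by (simp add: rvec_def)
qed

lemma sexp_normalized_sum:
  fixes X V \<eta> :: "nat \<Rightarrow> 'w \<Rightarrow> real" and \<mu> :: "nat \<Rightarrow> real measure"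
  assumes ab: "a \<le> b"
    and X: "\<And>i w. i \<ge> 1 \<Longrightarrow> X i w = V i w * \<eta> i w"
    and V: "\<And>i. i \<ge> 1 \<Longrightarrow> maximal_dist P (V i) a b" "\<And>i. i \<ge> 1 \<Longrightarrow> V i \<in> borel_measurable M"
    and \<eta>: "\<And>i. i \<ge> 1 \<Longrightarrow> classical_dist P (\<eta> i) (\<mu> i)" "\<And>i. i \<ge> 1 \<Longrightarrow> \<eta> i \<in> borel_measurable M"
    and indep: "\<And>n. n \<ge> 1 \<Longrightarrow>
          sl_indep P (map V [1..<n+1]) (map \<eta> [1..<n+1]) \<and>
          (\<forall>i. 1 \<le> i \<and> i < n \<longrightarrow> sl_indep P (map V [1..<i+1]) [V (i+1)]) \<and>
          classical_indep P (map \<eta> [1..<n+1]) (\<lambda>j. \<mu> (j+1))"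
    and n: "n \<ge> 1"
    and fc: "continuous_on UNIV \<phi>" and fB: "\<And>x. \<bar>\<phi> x\<bar> \<le> B"
  shows "sexp P (\<lambda>w. \<phi> ((\<Sum>i=1..n. X i w) / sqrt (real n))) =
    upper_weighted_sum_integral a b (\<lambda>j. \<mu> (j+1)) \<phi> n"
proof -
  obtain k where k: "n = Suc k" using n by (cases n) auto
  have V_indep: "sl_indep P (map V [1..<i+1]) [V (i+1)]" if "i \<ge> 1" for i
    using indep[of "i+1"] that by auto
  have "maximal_dist_on P (map V [1..<n+1]) (cube n a b)"
    using maximal_dist_on_cube[OF ab V(1) V_indep, of k] k by simp
  then have "sexp P (\<lambda>w. \<phi> ((\<Sum>i<n. (map V [1..<n+1] ! i) w * (map \<eta> [1..<n+1] ! i) w) / sqrt (real n))) =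
      upper_weighted_sum_integral a b (\<lambda>j. \<mu> (j+1)) \<phi> n"
    unfolding upper_weighted_sum_integral_def
    using indep[OF n] \<eta>(1) unfolding classical_dist_def
    by (intro sexp_indep_weighted_sum[OF _ cube_nonempty[OF ab] _ _ _ _ _ _ _ _ _ fc fB])
       (use V(2) \<eta>(2) in \<open>auto simp: cube_def\<close>)
  moreover have "(\<Sum>i=1..n. X i w) = (\<Sum>i<n. (map V [1..<n+1] ! i) w * (map \<eta> [1..<n+1] ! i) w)" for w
    using X by (simp add: sum.atLeast1_atMost_eq nth_map nth_upt del: upt_Suc)
  ultimately show ?thesis by simp
qed

end

section \<open>Identification of the laws\<close>

lemma real_distribution_eqI_cos_sin:
  fixes M1 M2 :: "real measure"
  assumes "real_distribution M1" "real_distribution M2"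
    and cos: "\<And>t. (\<integral>x. cos (t * x) \<partial>M1) = (\<integral>x. cos (t * x) \<partial>M2)"
    and sin: "\<And>t. (\<integral>x. sin (t * x) \<partial>M1) = (\<integral>x. sin (t * x) \<partial>M2)"
  shows "M1 = M2"
proof (rule Levy_uniqueness[OF assms(1,2)])
  have char: "char M t = complex_of_real (\<integral>x. cos (t * x) \<partial>M) + \<i> * complex_of_real (\<integral>x. sin (t * x) \<partial>M)"
    if "real_distribution M" for M t
  proof -
    interpret real_distribution M by fact
    have iexp: "iexp y = complex_of_real (cos y) + \<i> * complex_of_real (sin y)" for y
      by (simp add: complex_eq_iff cis_conv_exp[symmetric])
    have "integrable M (\<lambda>x. complex_of_real (cos (t * x)))" "integrable M (\<lambda>x. \<i> * complex_of_real (sin (t * x)))"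
      by (auto intro!: integrable_const_bound[where B=1] simp: norm_mult)
    then have "(\<integral>x. complex_of_real (cos (t * x)) + \<i> * complex_of_real (sin (t * x)) \<partial>M) =
        complex_of_real (\<integral>x. cos (t * x) \<partial>M) + \<i> * complex_of_real (\<integral>x. sin (t * x) \<partial>M)"
      by (simp add: integral_complex_of_real)
    then show ?thesis
      unfolding char_def iexp .
  qed
  show "char M1 = char M2"
    using char[OF assms(1)] char[OF assms(2)] cos sin by auto
qed

lemma continuous_scaled_measurable:
  fixes h :: "real \<Rightarrow> real"
  assumes "sets N = sets borel" "continuous_on UNIV h"
  shows "(\<lambda>x. h (v * x)) \<in> borel_measurable N"
  unfolding measurable_cong_sets[OF assms(1) refl]
  by (intro borel_measurable_continuous_onI continuous_on_compose2[OF assms(2)]) (auto intro!: continuous_intros)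

lemma abs_integral_scaled_le:
  fixes h :: "real \<Rightarrow> real"
  assumes "prob_space N" "sets N = sets borel" "continuous_on UNIV h" "\<And>x. \<bar>h x\<bar> \<le> B"
  shows "\<bar>\<integral>x. h (v * x) \<partial>N\<bar> \<le> B"
  using prob_space_bounded_integrable(2)[OF assms(1) continuous_scaled_measurable[OF assms(2,3)]] assms(4)
  by blast

lemma isCont_integral_scaled:
  fixes h :: "real \<Rightarrow> real"
  assumes N: "prob_space N" "sets N = sets borel" and hc: "continuous_on UNIV h" and hB: "\<And>x. \<bar>h x\<bar> \<le> B"
  shows "isCont (\<lambda>v. \<integral>x. h (v * x) \<partial>N) v\<^sub>0"
proof (unfold continuous_at_sequentially comp_def, intro allI impI)
  fix vs assume vs: "vs \<longlonglongrightarrow> v\<^sub>0"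
  have "(\<lambda>k. h (vs k * x)) \<longlonglongrightarrow> h (v\<^sub>0 * x)" for x
  proof -
    have "isCont h (v\<^sub>0 * x)"
      using hc continuous_on_eq_continuous_at open_UNIV by blast
    moreover have "(\<lambda>k. vs k * x) \<longlonglongrightarrow> v\<^sub>0 * x"
      by (intro tendsto_intros vs)
    ultimately show ?thesis
      by (rule isCont_tendsto_compose)
  qed
  then show "(\<lambda>k. \<integral>x. h (vs k * x) \<partial>N) \<longlonglongrightarrow> (\<integral>x. h (v\<^sub>0 * x) \<partial>N)"
    by (intro prob_space_bounded_convergence[OF N(1) continuous_scaled_measurable[OF N(2) hc]
          continuous_scaled_measurable[OF N(2) hc] hB])
qed

lemma SUP_add_quadratic_le_eventually:
  fixes H :: "real \<Rightarrow> real"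
  assumes a0: "0 \<le> a" and ab: "a \<le> b" and b0: "0 < b" and HB: "\<And>v. \<bar>H v\<bar> \<le> B"
    and Hc: "isCont H b" and e: "e > 0"
  shows "\<forall>\<^sub>F l in at_top. (SUP v\<in>{a..b}. l * v^2 + H v) \<le> l * b^2 + H b + e"
proof -
  obtain d where d: "d > 0" "\<And>v. \<bar>v - b\<bar> < d \<Longrightarrow> \<bar>H v - H b\<bar> < e"
    using Hc e unfolding continuous_at_eps_delta dist_real_def by blast
  define d' where "d' = min d b"
  have d': "0 < d'" "d' \<le> d" "d' \<le> b" using d b0 by (auto simp: d'_def)
  have B0: "B \<ge> 0" using HB[of 0] by simp
  have "(SUP v\<in>{a..b}. l * v^2 + H v) \<le> l * b^2 + H b + e" if l: "max 0 (2 * B / (d' * b)) \<le> l" for l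
  proof (rule cSUP_least)
    fix v assume v: "v \<in> {a..b}"
    show "l * v^2 + H v \<le> l * b^2 + H b + e"
    proof (cases "v > b - d'")
      case True
      then have "H v \<le> H b + e"
        using v d' d(2)[of v] by (auto simp: abs_less_iff)
      moreover have "l * v^2 \<le> l * b^2"
        using v a0 l by (intro mult_left_mono power_mono) auto
      ultimately show ?thesis by simp
    next
      case False
      \<comment> \<open>away from b the quadratic term loses at least l d' b \<ge> 2 B\<close>
      then have "v^2 \<le> (b - d')^2" using v a0 by (intro power_mono) auto
      also have "\<dots> \<le> b^2 - d' * b" using d' by (simp add: power2_eq_square algebra_simps)
      finally have "l * v^2 \<le> l * (b^2 - d' * b)"
        using l by (intro mult_left_mono) auto
      moreover have "2 * B \<le> l * (d' * b)"
        using l d' b0 by (simp add: pos_divide_le_eq)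
      moreover have "H v \<le> B" "- B \<le> H b" using HB[of v] HB[of b] by (auto simp: abs_le_iff)
      ultimately show ?thesis
        using e by (simp add: right_diff_distrib)
    qed
  qed (use ab in simp)
  then show ?thesis
    using eventually_ge_at_top by (rule eventually_mono[rotated])
qed

lemma SUP_add_quadratic_tendsto:
  fixes H :: "real \<Rightarrow> real"
  assumes a0: "0 \<le> a" and ab: "a \<le> b" and b0: "0 < b" and HB: "\<And>v. \<bar>H v\<bar> \<le> B"
    and Hc: "isCont H b"
  shows "((\<lambda>l. (SUP v\<in>{a..b}. l * v^2 + H v) - l * b^2) \<longlongrightarrow> H b) at_top"
proof (rule order_tendstoI)
  have lower: "l * b^2 + H b \<le> (SUP v\<in>{a..b}. l * v^2 + H v)" if "0 \<le> l" for l
  proof (rule cSUP_upper)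
    have "l * v^2 + H v \<le> l * b^2 + B" if "v \<in> {a..b}" for v
    proof -
      have "v^2 \<le> b^2"
        using that a0 by (intro power_mono) auto
      then have "l * v^2 \<le> l * b^2"
        using \<open>0 \<le> l\<close> by (rule mult_left_mono)
      then show ?thesis
        using HB[of v] by (simp add: abs_le_iff)
    qed
    then show "bdd_above ((\<lambda>v. l * v^2 + H v) ` {a..b})"
      by (intro bdd_aboveI[of _ "l * b^2 + B"]) auto
  qed (use ab in simp)
  show "\<forall>\<^sub>F l in at_top. y < (SUP v\<in>{a..b}. l * v^2 + H v) - l * b^2" if "y < H b" for y
    using eventually_ge_at_top[of "0::real"] by eventually_elim (use lower that in force)
  show "\<forall>\<^sub>F l in at_top. (SUP v\<in>{a..b}. l * v^2 + H v) - l * b^2 < y" if y: "H b < y" for y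
  proof -
    have "0 < (y - H b) / 2"
      using y by simp
    from SUP_add_quadratic_le_eventually[OF a0 ab b0 HB Hc this] show ?thesis
      by eventually_elim (use y in argo)
  qed
qed

lemma integral_min_nat_tendsto:
  fixes f :: "'a \<Rightarrow> real"
  assumes "integrable N f" "\<And>x. 0 \<le> f x"
  shows "(\<lambda>K::nat. \<integral>x. min (f x) (real K) \<partial>N) \<longlonglongrightarrow> integral\<^sup>L N f"
proof (rule integral_dominated_convergence[where w=f])
  show "AE x in N. (\<lambda>K. min (f x) (real K)) \<longlonglongrightarrow> f x"
  proof (rule AE_I2)
    fix x
    have "\<forall>\<^sub>F K in sequentially. min (f x) (real K) = f x"
      using eventually_ge_at_top[of "nat \<lceil>f x\<rceil>"]
      by eventually_elim (use real_nat_ceiling_ge[of "f x"] in \<open>auto simp: min_def\<close>)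
    then show "(\<lambda>K. min (f x) (real K)) \<longlonglongrightarrow> f x"
      by (rule tendsto_eventually)
  qed
  show "(\<lambda>x. min (f x) (real K)) \<in> borel_measurable N" for K
    by (rule borel_measurable_min[OF borel_measurable_const borel_measurable_integrable[OF assms(1)]])
  show "AE x in N. norm (min (f x) (real K)) \<le> f x" for K
    using assms(2) by (intro AE_I2) auto
qed (use assms(1) in auto)

text \<open>The unbounded test function l y^2 + h y is reached through its bounded continuous
  truncations l min(y^2, K) + h y; the unit second moment identifies the limit.\<close>

lemma upper_scale_integral_truncated_square_tendsto:
  fixes h :: "real \<Rightarrow> real" and N :: "real measure"
  assumes N: "prob_space N" "sets N = sets borel" "integrable N (\<lambda>x. x^2)" "(\<integral>x. x^2 \<partial>N) = 1"
    and hc: "continuous_on UNIV h" and hB: "\<And>x. \<bar>h x\<bar> \<le> B"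
    and l: "0 \<le> l" and a0: "0 \<le> a" and ab: "a \<le> b"
  shows "(\<lambda>K::nat. upper_scale_integral a b N (\<lambda>y. l * min (y^2) (real K) + h y))
           \<longlonglongrightarrow> (SUP v\<in>{a..b}. l * v^2 + (\<integral>x. h (v * x) \<partial>N))"
  unfolding upper_scale_integral_def
proof (rule SUP_incseq_tendsto)
  interpret N: prob_space N by (rule N(1))
  have min_int: "integrable N (\<lambda>x. min ((v * x)^2) (real K))" for v K
    by (rule N.integrable_const_bound[where B="real K"]) (auto simp: measurable_cong_sets[OF N(2) refl])
  have sq_int: "integrable N (\<lambda>x. (v * x)^2)" for v
    using integrable_mult_left[OF N(3), of "v^2"] by (simp add: power_mult_distrib)
  have sq: "(\<integral>x. (v * x)^2 \<partial>N) = v^2" for v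
    using N(4) by (simp add: power_mult_distrib)
  have split: "(\<integral>x. l * min ((v * x)^2) (real K) + h (v * x) \<partial>N) =
       l * (\<integral>x. min ((v * x)^2) (real K) \<partial>N) + (\<integral>x. h (v * x) \<partial>N)" for v K
    using min_int[of v K] prob_space_bounded_integrable(1)[OF N(1) continuous_scaled_measurable[OF N(2) hc] hB]
    by simp
  have min_nonneg: "0 \<le> (\<integral>x. min ((v * x)^2) (real K) \<partial>N)" for v K
    by (rule integral_nonneg_AE) auto
  have min_le: "(\<integral>x. min ((v * x)^2) (real K) \<partial>N) \<le> v^2" for v K
    using integral_mono[OF min_int sq_int, of v K v] sq[of v] by simp
  show "{a..b} \<noteq> {}" using ab by simp
  fix v assume v: "v \<in> {a..b}"
  have vb: "v^2 \<le> b^2" using v a0 by (intro power_mono) auto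
  show "(\<integral>x. l * min ((v * x)^2) (real K) + h (v * x) \<partial>N) \<le> (\<integral>x. l * min ((v * x)^2) (real K') + h (v * x) \<partial>N)"
    if "K \<le> K'" for K K'
  proof -
    have "(\<integral>x. min ((v * x)^2) (real K) \<partial>N) \<le> (\<integral>x. min ((v * x)^2) (real K') \<partial>N)"
      by (rule integral_mono[OF min_int min_int]) (use that in auto)
    then show ?thesis
      unfolding split using l by (simp add: mult_left_mono)
  qed
  show "\<bar>\<integral>x. l * min ((v * x)^2) (real K) + h (v * x) \<partial>N\<bar> \<le> l * b^2 + B" for K
  proof -
    have "l * (\<integral>x. min ((v * x)^2) (real K) \<partial>N) \<le> l * b^2"
      using min_le[of v K] vb l by (intro mult_left_mono) auto
    moreover have "0 \<le> l * (\<integral>x. min ((v * x)^2) (real K) \<partial>N)"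
      using min_nonneg l by simp
    ultimately show ?thesis
      unfolding split using abs_integral_scaled_le[OF N(1,2) hc hB, of v] by (simp add: abs_le_iff)
  qed
  have "(\<lambda>K::nat. \<integral>x. min ((v * x)^2) (real K) \<partial>N) \<longlonglongrightarrow> v^2"
    using integral_min_nat_tendsto[OF sq_int] sq by simp
  then show "(\<lambda>K. \<integral>x. l * min ((v * x)^2) (real K) + h (v * x) \<partial>N) \<longlonglongrightarrow> l * v^2 + (\<integral>x. h (v * x) \<partial>N)"
    unfolding split by (intro tendsto_intros)
qed

lemma SUP_add_quadratic_eq_of_upper_scale_integral_eq:
  fixes \<mu>1 \<mu>2 :: "real measure" and h :: "real \<Rightarrow> real"
  assumes N1: "prob_space \<mu>1" "sets \<mu>1 = sets borel" "integrable \<mu>1 (\<lambda>x. x^2)" "(\<integral>x. x^2 \<partial>\<mu>1) = 1"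
    and N2: "prob_space \<mu>2" "sets \<mu>2 = sets borel" "integrable \<mu>2 (\<lambda>x. x^2)" "(\<integral>x. x^2 \<partial>\<mu>2) = 1"
    and a0: "0 \<le> a" and ab: "a \<le> b"
    and eq: "\<And>\<psi> B. continuous_on UNIV \<psi> \<Longrightarrow> (\<And>x. \<bar>\<psi> x\<bar> \<le> B) \<Longrightarrow>
               upper_scale_integral a b \<mu>1 \<psi> = upper_scale_integral a b \<mu>2 \<psi>"
    and hc: "continuous_on UNIV h" and hB: "\<And>x. \<bar>h x\<bar> \<le> B" and l: "0 \<le> l"
  shows "(SUP v\<in>{a..b}. l * v^2 + (\<integral>x. h (v * x) \<partial>\<mu>1)) = (SUP v\<in>{a..b}. l * v^2 + (\<integral>x. h (v * x) \<partial>\<mu>2))"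
proof -
  have "upper_scale_integral a b \<mu>1 (\<lambda>y. l * min (y^2) (real K) + h y) =
        upper_scale_integral a b \<mu>2 (\<lambda>y. l * min (y^2) (real K) + h y)" for K :: nat
  proof (rule eq)
    show "continuous_on UNIV (\<lambda>y. l * min (y^2) (real K) + h y)"
      by (intro continuous_intros hc)
    show "\<bar>l * min (y^2) (real K) + h y\<bar> \<le> l * real K + B" for y
    proof -
      have "0 \<le> l * min (y^2) (real K)" "l * min (y^2) (real K) \<le> l * real K"
        using l by (auto intro: mult_left_mono)
      then show ?thesis using hB[of y] by (simp add: abs_le_iff)
    qed
  qed
  then show ?thesis
    using LIMSEQ_unique[OF upper_scale_integral_truncated_square_tendsto[OF N1 hc hB l a0 ab]]
      upper_scale_integral_truncated_square_tendsto[OF N2 hc hB l a0 ab]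
    by simp
qed

lemma integral_scaled_eq_of_upper_scale_integral_eq:
  fixes \<mu>1 \<mu>2 :: "real measure" and h :: "real \<Rightarrow> real"
  assumes N1: "prob_space \<mu>1" "sets \<mu>1 = sets borel" "integrable \<mu>1 (\<lambda>x. x^2)" "(\<integral>x. x^2 \<partial>\<mu>1) = 1"
    and N2: "prob_space \<mu>2" "sets \<mu>2 = sets borel" "integrable \<mu>2 (\<lambda>x. x^2)" "(\<integral>x. x^2 \<partial>\<mu>2) = 1"
    and a0: "0 \<le> a" and ab: "a \<le> b" and b0: "0 < b"
    and eq: "\<And>\<psi> B. continuous_on UNIV \<psi> \<Longrightarrow> (\<And>x. \<bar>\<psi> x\<bar> \<le> B) \<Longrightarrow>
               upper_scale_integral a b \<mu>1 \<psi> = upper_scale_integral a b \<mu>2 \<psi>"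
    and hc: "continuous_on UNIV h" and hB: "\<And>x. \<bar>h x\<bar> \<le> B"
  shows "(\<integral>x. h (b * x) \<partial>\<mu>1) = (\<integral>x. h (b * x) \<partial>\<mu>2)"
proof -
  define H1 where "H1 v = (\<integral>x. h (v * x) \<partial>\<mu>1)" for v
  define H2 where "H2 v = (\<integral>x. h (v * x) \<partial>\<mu>2)" for v
  have SUP_eq: "(SUP v\<in>{a..b}. l * v^2 + H1 v) = (SUP v\<in>{a..b}. l * v^2 + H2 v)" if "0 \<le> l" for l
    unfolding H1_def H2_def by (rule SUP_add_quadratic_eq_of_upper_scale_integral_eq[OF N1 N2 a0 ab eq hc hB that])
  have "\<forall>\<^sub>F l in at_top. (SUP v\<in>{a..b}. l * v^2 + H2 v) - l * b^2 = (SUP v\<in>{a..b}. l * v^2 + H1 v) - l * b^2"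
    using eventually_ge_at_top[of "0::real"] by eventually_elim (use SUP_eq in simp)
  moreover have "((\<lambda>l. (SUP v\<in>{a..b}. l * v^2 + H2 v) - l * b^2) \<longlongrightarrow> H2 b) at_top"
    unfolding H2_def
    by (rule SUP_add_quadratic_tendsto[OF a0 ab b0 abs_integral_scaled_le isCont_integral_scaled])
       (rule N2 hc hB)+
  ultimately have "((\<lambda>l. (SUP v\<in>{a..b}. l * v^2 + H1 v) - l * b^2) \<longlongrightarrow> H2 b) at_top"
    by (rule Lim_transform_eventually[rotated])
  moreover have "((\<lambda>l. (SUP v\<in>{a..b}. l * v^2 + H1 v) - l * b^2) \<longlongrightarrow> H1 b) at_top"
    unfolding H1_def
    by (rule SUP_add_quadratic_tendsto[OF a0 ab b0 abs_integral_scaled_le isCont_integral_scaled])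
       (rule N1 hc hB)+
  ultimately show ?thesis
    unfolding H1_def H2_def using tendsto_unique[OF trivial_limit_at_top_linorder] by blast
qed

lemma law_eq_of_upper_scale_integral_eq:
  fixes \<mu>1 \<mu>2 :: "real measure"
  assumes N1: "prob_space \<mu>1" "sets \<mu>1 = sets borel" "integrable \<mu>1 (\<lambda>x. x^2)" "(\<integral>x. x^2 \<partial>\<mu>1) = 1"
    and N2: "prob_space \<mu>2" "sets \<mu>2 = sets borel" "integrable \<mu>2 (\<lambda>x. x^2)" "(\<integral>x. x^2 \<partial>\<mu>2) = 1"
    and a0: "0 \<le> a" and ab: "a \<le> b" and b0: "0 < b"
    and eq: "\<And>\<psi> B. continuous_on UNIV \<psi> \<Longrightarrow> (\<And>x. \<bar>\<psi> x\<bar> \<le> B) \<Longrightarrow>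
               upper_scale_integral a b \<mu>1 \<psi> = upper_scale_integral a b \<mu>2 \<psi>"
  shows "\<mu>1 = \<mu>2"
proof (rule real_distribution_eqI_cos_sin)
  show "real_distribution \<mu>1" "real_distribution \<mu>2"
    using N1 N2 unfolding real_distribution_def real_distribution_axioms_def by auto
  have tb: "t / b * (b * x) = t * x" for t x
    using b0 by simp
  show "(\<integral>x. cos (t * x) \<partial>\<mu>1) = (\<integral>x. cos (t * x) \<partial>\<mu>2)" for t
  proof -
    have "(\<integral>x. cos (t / b * (b * x)) \<partial>\<mu>1) = (\<integral>x. cos (t / b * (b * x)) \<partial>\<mu>2)"
      by (rule integral_scaled_eq_of_upper_scale_integral_eq[where h="\<lambda>y. cos (t / b * y)" and B=1,
            OF N1 N2 a0 ab b0 eq]) (use b0 in \<open>auto intro!: continuous_intros\<close>)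
    then show ?thesis by (simp only: tb)
  qed
  show "(\<integral>x. sin (t * x) \<partial>\<mu>1) = (\<integral>x. sin (t * x) \<partial>\<mu>2)" for t
  proof -
    have "(\<integral>x. sin (t / b * (b * x)) \<partial>\<mu>1) = (\<integral>x. sin (t / b * (b * x)) \<partial>\<mu>2)"
      by (rule integral_scaled_eq_of_upper_scale_integral_eq[where h="\<lambda>y. sin (t / b * y)" and B=1,
            OF N1 N2 a0 ab b0 eq]) (use b0 in \<open>auto intro!: continuous_intros\<close>)
    then show ?thesis by (simp only: tb)
  qed
qed

section \<open>Central limit theorem for weighted sums\<close>

lemma abs_exp_neg_minus_linear_le:
  fixes a :: real
  assumes "0 \<le> a" "a \<le> 1"
  shows "\<bar>exp (- a) - (1 - a)\<bar> \<le> 2 * a^2"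
proof -
  obtain t where t: "\<bar>t\<bar> \<le> \<bar>-a\<bar>" "exp (-a) = (\<Sum>m<2. (-a) ^ m / fact m) + exp t / fact 2 * (-a) ^ 2"
    using Maclaurin_exp_le[of "-a" 2] by blast
  have "exp t \<le> exp 1"
    using t(1) assms by simp
  also have "\<dots> \<le> 3"
    by (rule exp_le)
  finally have et: "exp t \<le> 3" .
  have "\<bar>exp (- a) - (1 - a)\<bar> = exp t / 2 * a^2"
    using t(2) by (simp add: numeral_2_eq_2)
  also have "\<dots> \<le> 3 / 2 * a^2"
    using et by (intro mult_right_mono divide_right_mono) auto
  also have "\<dots> \<le> 2 * a^2"
    by simp
  finally show ?thesis .
qed

lemma prod_exp_weighted_squares_tendsto:
  fixes n :: "nat \<Rightarrow> nat" and v :: "nat \<Rightarrow> real list"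
  assumes "(\<lambda>k. (\<Sum>i<n k. (v k ! i)^2) / real (n k)) \<longlonglongrightarrow> s2"
  shows "(\<lambda>k. \<Prod>i<n k. complex_of_real (exp (- ((t * v k ! i / sqrt (real (n k)))^2 / 2))))
    \<longlonglongrightarrow> exp (- (t^2 * s2) / 2)"
proof -
  have "(\<Prod>i<n k. complex_of_real (exp (- ((t * v k ! i / sqrt (real (n k)))^2 / 2)))) =
      exp (- (t^2 * ((\<Sum>i<n k. (v k ! i)^2) / real (n k))) / 2)" for k
  proof -
    have "(\<Prod>i<n k. complex_of_real (exp (- ((t * v k ! i / sqrt (real (n k)))^2 / 2)))) =
        exp (\<Sum>i<n k. - ((t * v k ! i / sqrt (real (n k)))^2 / 2))"
      by (simp add: exp_sum)
    also have "(\<Sum>i<n k. - ((t * v k ! i / sqrt (real (n k)))^2 / 2)) =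
        - (t^2 * ((\<Sum>i<n k. (v k ! i)^2) / real (n k))) / 2"
      by (simp add: power_divide power_mult_distrib sum_divide_distrib sum_distrib_left sum_negf[symmetric])
    finally show ?thesis .
  qed
  moreover have "(\<lambda>k. complex_of_real (exp (- (t^2 * ((\<Sum>i<n k. (v k ! i)^2) / real (n k))) / 2)))
      \<longlonglongrightarrow> exp (- (t^2 * s2) / 2)"
    by (intro tendsto_intros assms) auto
  ultimately show ?thesis
    by simp
qed

context
  fixes \<mu> :: "real measure"
  assumes rd: "real_distribution \<mu>"
    and i1: "integrable \<mu> (\<lambda>x. x)" and i2: "integrable \<mu> (\<lambda>x. x^2)"
    and m0: "(\<integral>x. x \<partial>\<mu>) = 0" and v1: "(\<integral>x. x^2 \<partial>\<mu>) = 1"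
begin

interpretation \<mu>: real_distribution \<mu> by (rule rd)

text \<open>The error bound of the second-order expansion of the characteristic function,
  as in char_approx3.\<close>

definition char_error :: "real \<Rightarrow> real" where
  "char_error r = (\<integral>x. min (6 * x^2) (r * \<bar>x\<bar>^3) \<partial>\<mu>)"

lemma char_error_integrable: "0 \<le> r \<Longrightarrow> integrable \<mu> (\<lambda>x. min (6 * x^2) (r * \<bar>x\<bar>^3))"
  by (rule Bochner_Integration.integrable_bound[where f="\<lambda>x. 6 * x^2"]) (auto intro!: i2)

lemma char_error_mono: "0 \<le> r \<Longrightarrow> r \<le> r' \<Longrightarrow> char_error r \<le> char_error r'"
  unfolding char_error_def
  by (intro integral_mono char_error_integrable min.mono mult_right_mono) auto

lemma char_error_nonneg: "0 \<le> r \<Longrightarrow> 0 \<le> char_error r"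
  unfolding char_error_def by (rule integral_nonneg_AE) auto

lemma char_error_tendsto_0:
  assumes "rs \<longlonglongrightarrow> 0" "\<And>k. rs k \<ge> 0"
  shows "(\<lambda>k. char_error (rs k)) \<longlonglongrightarrow> 0"
proof -
  have "(\<lambda>k. \<integral>x. min (6 * x^2) (rs k * \<bar>x\<bar>^3) \<partial>\<mu>) \<longlonglongrightarrow> (\<integral>x. 0 \<partial>\<mu>)"
  proof (rule integral_dominated_convergence[where w="\<lambda>x. 6 * x^2"])
    show "AE x in \<mu>. (\<lambda>k. min (6 * x^2) (rs k * \<bar>x\<bar>^3)) \<longlonglongrightarrow> 0"
    proof (rule AE_I2)
      fix x :: real
      have "(\<lambda>k. min (6 * x^2) (rs k * \<bar>x\<bar>^3)) \<longlonglongrightarrow> min (6 * x^2) (0 * \<bar>x\<bar>^3)"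
        by (intro tendsto_min tendsto_mult assms(1) tendsto_const)
      then show "(\<lambda>k. min (6 * x^2) (rs k * \<bar>x\<bar>^3)) \<longlonglongrightarrow> 0" by simp
    qed
    show "AE x in \<mu>. norm (min (6 * x^2) (rs k * \<bar>x\<bar>^3)) \<le> 6 * x^2" for k
      using assms(2)[of k] by (intro AE_I2) (auto simp: abs_le_iff)
  qed (use i2 in auto)
  then show ?thesis unfolding char_error_def by simp
qed

lemma norm_char_minus_gaussian_le:
  assumes "u^2 / 2 \<le> 1"
  shows "cmod (char \<mu> u - exp (- (u^2 / 2))) \<le> u^2 / 6 * char_error \<bar>u\<bar> + 2 * (u^2/2)^2"
proof -
  have var: "(\<integral>x. (x - (\<integral>x. x \<partial>\<mu>))^2 \<partial>\<mu>) = 1" using m0 v1 by simp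
  have "cmod (char \<mu> u - (1 - u^2 / 2)) \<le> u^2 / 6 * char_error \<bar>u\<bar>"
    using \<mu>.char_approx3[OF i1 m0 _ var, of u] i2 unfolding char_error_def by (simp add: power2_eq_square)
  moreover have "cmod (complex_of_real (1 - u^2 / 2) - exp (- (u^2 / 2))) \<le> 2 * (u^2/2)^2"
  proof -
    have "cmod (complex_of_real (1 - u^2 / 2) - exp (- (u^2 / 2))) = \<bar>exp (- (u^2 / 2)) - (1 - u^2/2)\<bar>"
      by (simp only: of_real_diff[symmetric] norm_of_real abs_minus_commute)
    also have "\<dots> \<le> 2 * (u^2/2)^2"
      by (rule abs_exp_neg_minus_linear_le) (use assms in auto)
    finally show ?thesis .
  qed
  ultimately show ?thesis
    using norm_triangle_ineq[of "char \<mu> u - (1 - u^2 / 2)" "complex_of_real (1 - u^2 / 2) - exp (- (u^2 / 2))"]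
    by simp
qed

lemma norm_prod_char_minus_gaussian_le:
  fixes n :: nat and u :: "nat \<Rightarrow> real"
  assumes u: "\<And>i. i < n \<Longrightarrow> \<bar>u i\<bar> \<le> r" and r: "0 \<le> r" "r \<le> 1"
  shows "norm ((\<Prod>i<n. char \<mu> (u i)) - (\<Prod>i<n. complex_of_real (exp (- ((u i)^2 / 2)))))
    \<le> real n * (r^2 / 6 * char_error r + 2 * (r^2 / 2)^2)"
proof -
  have each: "cmod (char \<mu> (u i) - exp (- ((u i)^2 / 2))) \<le> r^2 / 6 * char_error r + 2 * (r^2 / 2)^2"
    if i: "i < n" for i
  proof -
    have ur: "(u i)^2 \<le> r^2"
      using power_mono[OF u[OF i] abs_ge_zero, of 2] by simp
    moreover have "r^2 \<le> 1"
      using r by (simp add: power_le_one)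
    ultimately have "cmod (char \<mu> (u i) - exp (- ((u i)^2 / 2))) \<le>
        (u i)^2 / 6 * char_error \<bar>u i\<bar> + 2 * ((u i)^2/2)^2"
      by (intro norm_char_minus_gaussian_le) simp
    also have "\<dots> \<le> r^2 / 6 * char_error r + 2 * (r^2 / 2)^2"
    proof (rule add_mono)
      have "char_error \<bar>u i\<bar> \<le> char_error r"
        using u[OF i] by (intro char_error_mono) auto
      then show "(u i)^2 / 6 * char_error \<bar>u i\<bar> \<le> r^2 / 6 * char_error r"
        using ur char_error_nonneg[OF r(1)] char_error_nonneg[OF abs_ge_zero] by (intro mult_mono) auto
      have "((u i)^2 / 2)^2 \<le> (r^2 / 2)^2"
        using ur by (intro power_mono) auto
      then show "2 * ((u i)^2 / 2)^2 \<le> 2 * (r^2 / 2)^2"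
        by simp
    qed
    finally show ?thesis .
  qed
  have "norm ((\<Prod>i<n. char \<mu> (u i)) - (\<Prod>i<n. complex_of_real (exp (- ((u i)^2 / 2))))) \<le>
      (\<Sum>i<n. cmod (char \<mu> (u i) - exp (- ((u i)^2 / 2))))"
    by (rule norm_prod_diff) (auto intro: \<mu>.cmod_char_le_1)
  also have "\<dots> \<le> (\<Sum>i<n. r^2 / 6 * char_error r + 2 * (r^2 / 2)^2)"
    by (rule sum_mono) (rule each, simp)
  also have "\<dots> = real n * (r^2 / 6 * char_error r + 2 * (r^2 / 2)^2)"
    by simp
  finally show ?thesis .
qed

lemma char_weighted_prod_tendsto:
  fixes n :: "nat \<Rightarrow> nat" and v :: "nat \<Rightarrow> real list"
  assumes n: "filterlim n at_top sequentially" and b: "0 \<le> b"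
    and vb: "\<And>k i. i < n k \<Longrightarrow> \<bar>v k ! i\<bar> \<le> b"
    and avg: "(\<lambda>k. (\<Sum>i<n k. (v k ! i)^2) / real (n k)) \<longlonglongrightarrow> s2"
  shows "(\<lambda>k. \<Prod>i<n k. char \<mu> (t * v k ! i / sqrt (real (n k)))) \<longlonglongrightarrow> exp (- (s2 * t^2) / 2)"
proof -
  define u where "u k i = t * v k ! i / sqrt (real (n k))" for k i
  define r where "r k = \<bar>t\<bar> * b / sqrt (real (n k))" for k
  have r0: "r \<longlonglongrightarrow> 0"
    unfolding r_def
    by (intro tendsto_divide_0[OF tendsto_const] filterlim_at_top_imp_at_infinity
        filterlim_compose[OF sqrt_at_top filterlim_compose[OF filterlim_real_sequentially n]])
  have r_nonneg: "r k \<ge> 0" for k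
    unfolding r_def using b by simp
  have u_le: "\<bar>u k i\<bar> \<le> r k" if "i < n k" for k i
    unfolding u_def r_def abs_divide abs_mult
    using vb[OF that] by (simp add: divide_right_mono mult_left_mono)
  have n_pos: "\<forall>\<^sub>F k in sequentially. n k \<ge> 1"
    using n by (simp add: filterlim_at_top)
  define bound where "bound k = t^2 * b^2 / 6 * char_error (r k) + (t^2 * b^2)^2 / (2 * real (n k))" for k
  have bound_eq: "real (n k) * ((r k)^2 / 6 * char_error (r k) + 2 * ((r k)^2 / 2)^2) = bound k" if "n k \<ge> 1" for k
  proof -
    have r2: "(r k)^2 = t^2 * b^2 / real (n k)"
      unfolding r_def using that by (simp add: power_divide power_mult_distrib)
    show ?thesis
      unfolding bound_def r2 using that by (simp add: field_simps power2_eq_square)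
  qed
  have "norm ((\<Prod>i<n k. char \<mu> (u k i)) - (\<Prod>i<n k. complex_of_real (exp (- ((u k i)^2 / 2)))))
      \<le> bound k" if "n k \<ge> 1" "r k < 1" for k
    using norm_prod_char_minus_gaussian_le[where u="u k" and n="n k", OF u_le r_nonneg less_imp_le[OF that(2)]] bound_eq[OF that(1)]
    by simp
  then have "\<forall>\<^sub>F k in sequentially. norm ((\<Prod>i<n k. char \<mu> (u k i)) -
      (\<Prod>i<n k. complex_of_real (exp (- ((u k i)^2 / 2))))) \<le> bound k"
    using n_pos order_tendstoD(2)[OF r0 zero_less_one] by (auto elim: eventually_elim2)
  moreover have "bound \<longlonglongrightarrow> 0"
    unfolding bound_def
    using tendsto_mult[OF tendsto_const char_error_tendsto_0[OF r0 r_nonneg], of "t^2 * b^2 / 6"]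
    by (intro tendsto_add_zero tendsto_divide_0[OF tendsto_const] filterlim_at_top_imp_at_infinity
        filterlim_tendsto_pos_mult_at_top[OF tendsto_const] filterlim_compose[OF filterlim_real_sequentially n])
       auto
  ultimately have "(\<lambda>k. (\<Prod>i<n k. char \<mu> (u k i)) - (\<Prod>i<n k. complex_of_real (exp (- ((u k i)^2 / 2))))) \<longlonglongrightarrow> 0"
    by (rule Lim_null_comparison)
  moreover have "(\<lambda>k. \<Prod>i<n k. complex_of_real (exp (- ((u k i)^2 / 2)))) \<longlonglongrightarrow> exp (- (t^2 * s2) / 2)"
    unfolding u_def by (rule prod_exp_weighted_squares_tendsto[OF avg])
  ultimately have "(\<lambda>k. ((\<Prod>i<n k. char \<mu> (u k i)) - (\<Prod>i<n k. complex_of_real (exp (- ((u k i)^2 / 2)))))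
      + (\<Prod>i<n k. complex_of_real (exp (- ((u k i)^2 / 2))))) \<longlonglongrightarrow> 0 + complex_of_real (exp (- (t^2 * s2) / 2))"
    by (rule tendsto_add)
  then show ?thesis
    by (simp add: u_def mult.commute)
qed

lemma weighted_sum_measurable:
  "(\<lambda>x. (\<Sum>i<(n::nat). c i * x i) / d) \<in> borel_measurable (PiM {..<n} (\<lambda>_. \<mu>))"
proof -
  have "(\<lambda>x. x i) \<in> borel_measurable (PiM {..<n} (\<lambda>_. \<mu>))" if "i < n" for i
    using measurable_component_singleton[of i "{..<n}" "\<lambda>_. \<mu>"] that
      measurable_cong_sets[OF refl \<mu>.events_eq_borel] by auto
  then show ?thesis
    by (intro borel_measurable_divide borel_measurable_sum borel_measurable_times borel_measurable_const) auto
qed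

lemma prob_space_PiM_power: "prob_space (PiM {..<n} (\<lambda>_. \<mu>))"
  by (rule prob_space_PiM) (use \<mu>.prob_space_axioms in auto)

lemma char_distr_weighted_sum:
  fixes n :: nat
  shows "char (distr (PiM {..<n} (\<lambda>_. \<mu>)) borel (\<lambda>x. (\<Sum>i<n. c i * x i) / d)) t = (\<Prod>i<n. char \<mu> (t * c i / d))"
proof -
  interpret product_prob_space "\<lambda>_::nat. \<mu>"
    by (rule product_prob_spaceI) (use \<mu>.prob_space_axioms in auto)
  have "char (distr (PiM {..<n} (\<lambda>_. \<mu>)) borel (\<lambda>x. (\<Sum>i<n. c i * x i) / d)) t =
        (\<integral>x. iexp (t * ((\<Sum>i<n. c i * x i) / d)) \<partial>(PiM {..<n} (\<lambda>_. \<mu>)))"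
    unfolding char_def by (rule integral_distr[OF weighted_sum_measurable]) simp
  also have "\<dots> = (\<integral>x. (\<Prod>i\<in>{..<n}. (\<lambda>i y. iexp (t * c i / d * y)) i (x i)) \<partial>(PiM {..<n} (\<lambda>_. \<mu>)))"
  proof (rule Bochner_Integration.integral_cong[OF refl])
    fix x :: "nat \<Rightarrow> real"
    have "\<i> * complex_of_real (t * ((\<Sum>i<n. c i * x i) / d)) = (\<Sum>i<n. \<i> * complex_of_real (t * c i / d * x i))"
      by (simp add: sum_distrib_left sum_divide_distrib[symmetric] of_real_sum[symmetric] ac_simps)
    then show "iexp (t * ((\<Sum>i<n. c i * x i) / d)) = (\<Prod>i\<in>{..<n}. (\<lambda>i y. iexp (t * c i / d * y)) i (x i))"
      by (simp add: exp_sum)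
  qed
  also have "\<dots> = (\<Prod>i\<in>{..<n}. integral\<^sup>L \<mu> (\<lambda>y. iexp (t * c i / d * y)))"
  proof (rule product_integral_prod)
    show "integrable \<mu> (\<lambda>y. iexp (t * c i / d * y))" for i
      by (rule \<mu>.integrable_iexp) auto
  qed simp
  also have "\<dots> = (\<Prod>i<n. char \<mu> (t * c i / d))"
    by (simp add: char_def)
  finally show ?thesis .
qed

lemma weighted_clt:
  fixes n :: "nat \<Rightarrow> nat" and v :: "nat \<Rightarrow> real list" and \<phi> :: "real \<Rightarrow> real"
  assumes n: "filterlim n at_top sequentially" and b: "0 \<le> b"
    and vb: "\<And>k i. i < n k \<Longrightarrow> \<bar>v k ! i\<bar> \<le> b"
    and avg: "(\<lambda>k. (\<Sum>i<n k. (v k ! i)^2) / real (n k)) \<longlonglongrightarrow> s2" and s2: "0 \<le> s2"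
    and fc: "continuous_on UNIV \<phi>" and fB: "\<And>x. \<bar>\<phi> x\<bar> \<le> B"
  shows "(\<lambda>k. \<integral>x. \<phi> ((\<Sum>i<n k. v k ! i * x i) / sqrt (real (n k))) \<partial>(PiM {..<n k} (\<lambda>_. \<mu>)))
           \<longlonglongrightarrow> (\<integral>x. \<phi> (sqrt s2 * x) \<partial>std_normal_distribution)"
proof -
  define D where "D k = distr (PiM {..<n k} (\<lambda>_. \<mu>)) borel (\<lambda>x. (\<Sum>i<n k. v k ! i * x i) / sqrt (real (n k)))" for k
  define D' where "D' = distr std_normal_distribution borel (\<lambda>x. sqrt s2 * x)"
  interpret N: real_distribution std_normal_distribution by (rule real_dist_normal_dist)
  have N_meas: "(\<lambda>x. sqrt s2 * x) \<in> borel_measurable std_normal_distribution"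
    using measurable_cong_sets[OF N.events_eq_borel refl] by simp
  have D: "real_distribution (D k)" for k
    unfolding D_def by (rule prob_space.real_distribution_distr[OF prob_space_PiM_power weighted_sum_measurable])
  have D': "real_distribution D'"
    unfolding D'_def by (rule N.real_distribution_distr[OF N_meas])
  have "char D' t = exp (- (s2 * t^2) / 2)" for t
  proof -
    have "char D' t = char std_normal_distribution (t * sqrt s2)"
      unfolding D'_def char_def by (subst integral_distr[OF N_meas]) (simp_all add: ac_simps)
    also have "\<dots> = exp (- (s2 * t^2) / 2)"
      using s2 by (simp add: char_std_normal_distribution power_mult_distrib mult.commute)
    finally show ?thesis .
  qed
  moreover have "char (D k) t = (\<Prod>i<n k. char \<mu> (t * v k ! i / sqrt (real (n k))))" for k t
    unfolding D_def by (rule char_distr_weighted_sum)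
  ultimately have "weak_conv_m D D'"
    using char_weighted_prod_tendsto[OF n b vb avg] by (intro levy_continuity[OF D D']) simp
  from weak_conv_imp_integral_bdd_continuous_conv[OF D D' this, of \<phi> B]
  have "(\<lambda>k. integral\<^sup>L (D k) \<phi>) \<longlonglongrightarrow> integral\<^sup>L D' \<phi>"
    using fB fc continuous_on_eq_continuous_at[of UNIV \<phi>] by auto
  moreover have "integral\<^sup>L (D k) \<phi> = (\<integral>x. \<phi> ((\<Sum>i<n k. v k ! i * x i) / sqrt (real (n k))) \<partial>(PiM {..<n k} (\<lambda>_. \<mu>)))" for k
    unfolding D_def by (rule integral_distr[OF weighted_sum_measurable borel_measurable_continuous_onI[OF fc]])
  moreover have "integral\<^sup>L D' \<phi> = (\<integral>x. \<phi> (sqrt s2 * x) \<partial>std_normal_distribution)"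
    unfolding D'_def by (rule integral_distr[OF N_meas borel_measurable_continuous_onI[OF fc]])
  ultimately show ?thesis by simp
qed

end

section \<open>Convergence of the upper expectations\<close>

lemma mean_square_in_cube:
  assumes "v \<in> cube n a b" "0 \<le> a" "n \<ge> 1"
  shows "(\<Sum>i<n. (v ! i)^2) / real n \<in> {a^2..b^2}"
proof -
  have bounds: "a^2 \<le> (v ! i)^2 \<and> (v ! i)^2 \<le> b^2" if "i < n" for i
  proof -
    have "set v \<subseteq> {a..b}" "i < length v"
      using assms(1) that unfolding cube_def by auto
    then have "v ! i \<in> {a..b}"
      by (metis nth_mem subsetD)
    then show ?thesis
      using assms(2) by (auto intro: power_mono)
  qed
  have "(\<Sum>i<n. a^2) \<le> (\<Sum>i<n. (v ! i)^2)" "(\<Sum>i<n. (v ! i)^2) \<le> (\<Sum>i<n. b^2)"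
    by (rule sum_mono, use bounds in simp)+
  then show ?thesis
    using assms(3) by (simp add: field_simps)
qed

context
  fixes \<mu> :: "real measure" and a b :: real and \<phi> :: "real \<Rightarrow> real" and B :: real
  assumes rd: "real_distribution \<mu>"
    and i1: "integrable \<mu> (\<lambda>x. x)" and i2: "integrable \<mu> (\<lambda>x. x^2)"
    and m0: "(\<integral>x. x \<partial>\<mu>) = 0" and v1: "(\<integral>x. x^2 \<partial>\<mu>) = 1"
    and a0: "0 \<le> a" and ab: "a \<le> b"
    and fc: "continuous_on UNIV \<phi>" and fB: "\<And>x. \<bar>\<phi> x\<bar> \<le> B"
begin

interpretation N: real_distribution std_normal_distribution
  by (rule real_dist_normal_dist)

lemma bdd_above_weighted_sum_integrals:
  "bdd_above ((\<lambda>v. \<integral>x. \<phi> ((\<Sum>i<n. v!i * x i) / sqrt (real n)) \<partial>(PiM {..<n} (\<lambda>_. \<mu>))) ` C)"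
proof (rule bdd_above_image_abs_le)
  show "\<bar>\<integral>x. \<phi> ((\<Sum>i<n. v!i * x i) / sqrt (real n)) \<partial>(PiM {..<n} (\<lambda>_. \<mu>))\<bar> \<le> B" for v
    using prob_space_bounded_integrable(2)[OF prob_space_PiM_power[OF rd i1 i2 m0 v1]
        measurable_compose[OF weighted_sum_measurable[OF rd i1 i2 m0 v1] borel_measurable_continuous_onI[OF fc]]]
      fB by (simp add: comp_def)
qed

lemma bdd_above_scaled_normal_integrals:
  "bdd_above ((\<lambda>\<sigma>. \<integral>x. \<phi> (\<sigma> * x) \<partial>std_normal_distribution) ` C)"
  by (rule bdd_above_image_abs_le abs_integral_scaled_le N.prob_space_axioms N.events_eq_borel fc fB)+

lemma upper_weighted_sum_integral_eventually_gt:
  assumes "y < upper_scale_integral a b std_normal_distribution \<phi>"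
  shows "\<forall>\<^sub>F n in sequentially. y < upper_weighted_sum_integral a b (\<lambda>_. \<mu>) \<phi> n"
proof -
  obtain \<sigma> where \<sigma>: "\<sigma> \<in> {a..b}" "y < (\<integral>x. \<phi> (\<sigma> * x) \<partial>std_normal_distribution)"
    using assms less_cSUP_iff[OF _ bdd_above_scaled_normal_integrals] ab
    unfolding upper_scale_integral_def by auto
  define v where "v k = replicate (Suc k) \<sigma>" for k
  have v: "v k \<in> cube (Suc k) a b" for k
    using \<sigma>(1) by (auto simp: v_def cube_def)
  have "(\<lambda>k. \<integral>x. \<phi> ((\<Sum>i<Suc k. v k ! i * x i) / sqrt (real (Suc k))) \<partial>(PiM {..<Suc k} (\<lambda>_. \<mu>)))
      \<longlonglongrightarrow> (\<integral>x. \<phi> (sqrt (\<sigma>^2) * x) \<partial>std_normal_distribution)"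
  proof (rule weighted_clt[OF rd i1 i2 m0 v1 filterlim_Suc _ _ _ _ fc fB])
    show "\<bar>v k ! i\<bar> \<le> b" if "i < Suc k" for k i
      using that \<sigma>(1) a0 by (simp add: v_def del: replicate_Suc)
    have "(\<Sum>i<Suc k. (v k ! i)^2) = (\<Sum>i<Suc k. \<sigma>^2)" for k
      by (rule sum.cong) (auto simp: v_def simp del: replicate_Suc)
    then show "(\<lambda>k. (\<Sum>i<Suc k. (v k ! i)^2) / real (Suc k)) \<longlonglongrightarrow> \<sigma>^2"
      by simp
  qed (use a0 ab in auto)
  then have "\<forall>\<^sub>F k in sequentially.
      y < (\<integral>x. \<phi> ((\<Sum>i<Suc k. v k ! i * x i) / sqrt (real (Suc k))) \<partial>(PiM {..<Suc k} (\<lambda>_. \<mu>)))"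
    using \<sigma> a0 by (intro order_tendstoD(1)) auto
  then have "\<forall>\<^sub>F k in sequentially. y < upper_weighted_sum_integral a b (\<lambda>_. \<mu>) \<phi> (Suc k)"
  proof (rule eventually_mono)
    fix k
    assume "y < (\<integral>x. \<phi> ((\<Sum>i<Suc k. v k ! i * x i) / sqrt (real (Suc k))) \<partial>(PiM {..<Suc k} (\<lambda>_. \<mu>)))"
    also have "\<dots> \<le> upper_weighted_sum_integral a b (\<lambda>_. \<mu>) \<phi> (Suc k)"
      unfolding upper_weighted_sum_integral_def
      by (rule cSUP_upper[OF v bdd_above_weighted_sum_integrals])
    finally show "y < upper_weighted_sum_integral a b (\<lambda>_. \<mu>) \<phi> (Suc k)" .
  qed
  then show ?thesis
    by (subst eventually_sequentially_Suc[symmetric])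
qed

text \<open>Weight vectors from cubes of growing dimension have mean squares in the compact
  [a^2, b^2]; along a subsequence where these converge to s2 the central limit theorem applies.\<close>

lemma weighted_sum_integral_subseq_tendsto:
  fixes v :: "nat \<Rightarrow> real list" and n :: "nat \<Rightarrow> nat"
  assumes v: "\<And>k. v k \<in> cube (n k) a b" and n: "strict_mono n" "\<And>k. n k \<ge> 1"
  obtains s2 q where "s2 \<in> {a^2..b^2}" "strict_mono q"
    "(\<lambda>k. \<integral>x. \<phi> ((\<Sum>i<n (q k). v (q k) ! i * x i) / sqrt (real (n (q k)))) \<partial>(PiM {..<n (q k)} (\<lambda>_. \<mu>)))
       \<longlonglongrightarrow> (\<integral>x. \<phi> (sqrt s2 * x) \<partial>std_normal_distribution)"
proof -
  define avg where "avg k = (\<Sum>i<n k. (v k ! i)^2) / real (n k)" for k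
  have avg: "\<forall>k. avg k \<in> {a^2..b^2}"
    unfolding avg_def using mean_square_in_cube[OF v a0 n(2)] by blast
  have "seq_compact {a^2..b^2}"
    by (rule compact_imp_seq_compact[OF compact_Icc])
  then obtain s2 q where q: "s2 \<in> {a^2..b^2}" "strict_mono q" "(avg \<circ> q) \<longlonglongrightarrow> s2"
    using avg by (rule seq_compactE)
  have "(\<lambda>k. \<integral>x. \<phi> ((\<Sum>i<n (q k). v (q k) ! i * x i) / sqrt (real (n (q k)))) \<partial>(PiM {..<n (q k)} (\<lambda>_. \<mu>)))
       \<longlonglongrightarrow> (\<integral>x. \<phi> (sqrt s2 * x) \<partial>std_normal_distribution)"
  proof (rule weighted_clt[OF rd i1 i2 m0 v1 _ _ _ _ _ fc fB])
    show "filterlim (\<lambda>k. n (q k)) at_top sequentially"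
      using filterlim_subseq[OF strict_mono_o[OF n(1) q(2)]] by (simp add: comp_def)
    show "\<bar>v (q k) ! i\<bar> \<le> b" if "i < n (q k)" for k i
      by (rule cube_abs_nth_le[OF v that a0])
    show "(\<lambda>k. (\<Sum>i<n (q k). (v (q k) ! i)^2) / real (n (q k))) \<longlonglongrightarrow> s2"
      using q(3) by (simp add: avg_def comp_def)
    show "0 \<le> b"
      using a0 ab by simp
    show "0 \<le> s2"
      using q(1) by (auto intro: order_trans[OF zero_le_power2])
  qed
  with q(1,2) that show ?thesis
    by blast
qed

lemma upper_weighted_sum_integral_eventually_lt:
  assumes y: "upper_scale_integral a b std_normal_distribution \<phi> < y"
  shows "\<forall>\<^sub>F n in sequentially. upper_weighted_sum_integral a b (\<lambda>_. \<mu>) \<phi> n < y"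
proof (rule ccontr)
  let ?I = "\<lambda>n v. \<integral>x. \<phi> ((\<Sum>i<n. v!i * x i) / sqrt (real n)) \<partial>(PiM {..<n} (\<lambda>_. \<mu>))"
  assume "\<not> ?thesis"
  from not_eventually_sequentiallyD[OF this]
  obtain r :: "nat \<Rightarrow> nat" where r: "strict_mono r" "\<And>k. y \<le> upper_weighted_sum_integral a b (\<lambda>_. \<mu>) \<phi> (r k)"
    by (auto simp: not_less)
  define c where "c = (upper_scale_integral a b std_normal_distribution \<phi> + y) / 2"
  have c: "upper_scale_integral a b std_normal_distribution \<phi> < c" "c < y"
    using y by (auto simp: c_def)
  have "\<forall>k. \<exists>v. v \<in> cube (r (Suc k)) a b \<and> c < ?I (r (Suc k)) v"
  proof
    fix k
    have "c < upper_weighted_sum_integral a b (\<lambda>_. \<mu>) \<phi> (r (Suc k))"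
      using r(2)[of "Suc k"] c(2) by linarith
    then show "\<exists>v. v \<in> cube (r (Suc k)) a b \<and> c < ?I (r (Suc k)) v"
      unfolding upper_weighted_sum_integral_def
      by (subst (asm) less_cSUP_iff[OF cube_nonempty[OF ab] bdd_above_weighted_sum_integrals]) blast
  qed
  from choice[OF this] obtain v where "\<forall>k. v k \<in> cube (r (Suc k)) a b \<and> c < ?I (r (Suc k)) (v k)"
    by blast
  then have v: "\<And>k. v k \<in> cube (r (Suc k)) a b" "\<And>k. c < ?I (r (Suc k)) (v k)"
    by simp_all
  have "strict_mono (\<lambda>k. r (Suc k))"
    using r(1) unfolding strict_mono_def by simp
  moreover have "r (Suc k) \<ge> 1" for k
    using seq_suble[OF r(1), of "Suc k"] by simp
  ultimately obtain s2 q where q: "s2 \<in> {a^2..b^2}"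
    "(\<lambda>k. ?I (r (Suc (q k))) (v (q k))) \<longlonglongrightarrow> (\<integral>x. \<phi> (sqrt s2 * x) \<partial>std_normal_distribution)"
    by (rule weighted_sum_integral_subseq_tendsto[OF v(1)])
  have "c \<le> (\<integral>x. \<phi> (sqrt s2 * x) \<partial>std_normal_distribution)"
  proof (rule tendsto_lowerbound[OF q(2)])
    show "\<forall>\<^sub>F k in sequentially. c \<le> ?I (r (Suc (q k))) (v (q k))"
      using v(2) by (intro always_eventually allI less_imp_le)
  qed simp
  moreover have "sqrt s2 \<in> {a..b}"
    using q(1) a0 ab real_sqrt_le_mono[of "a^2" s2] real_sqrt_le_mono[of s2 "b^2"] by auto
  then have "(\<integral>x. \<phi> (sqrt s2 * x) \<partial>std_normal_distribution) \<le> upper_scale_integral a b std_normal_distribution \<phi>"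
    unfolding upper_scale_integral_def by (rule cSUP_upper[OF _ bdd_above_scaled_normal_integrals])
  ultimately show False
    using c by simp
qed

lemma upper_weighted_sum_integral_tendsto:
  "upper_weighted_sum_integral a b (\<lambda>_. \<mu>) \<phi> \<longlonglongrightarrow> upper_scale_integral a b std_normal_distribution \<phi>"
proof (rule order_tendstoI)
  show "\<forall>\<^sub>F n in sequentially. y < upper_weighted_sum_integral a b (\<lambda>_. \<mu>) \<phi> n"
    if "y < upper_scale_integral a b std_normal_distribution \<phi>" for y
    using that by (rule upper_weighted_sum_integral_eventually_gt)
  show "\<forall>\<^sub>F n in sequentially. upper_weighted_sum_integral a b (\<lambda>_. \<mu>) \<phi> n < y"
    if "upper_scale_integral a b std_normal_distribution \<phi> < y" for y
    using that by (rule upper_weighted_sum_integral_eventually_lt)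
qed

end

lemma upper_scale_integral_zero:
  "prob_space \<nu> \<Longrightarrow> upper_scale_integral 0 0 \<nu> \<phi> = \<phi> 0"
  unfolding upper_scale_integral_def by (simp add: prob_space.prob_space)

lemma upper_weighted_sum_integral_zero:
  assumes "\<And>j. prob_space (\<mu> j)"
  shows "upper_weighted_sum_integral 0 0 \<mu> \<phi> n = \<phi> 0"
proof -
  have "cube n 0 0 = {replicate n 0}"
    by (auto simp: cube_def intro!: replicate_eqI)
  then show ?thesis
    unfolding upper_weighted_sum_integral_def
    using prob_space.prob_space[OF prob_space_PiM[of "{..<n}" \<mu>]] assms by simp
qed

context
  fixes M :: "'w measure" and P :: "'w measure set"
  assumes sle: "sle_space M P"
begin

lemma classical_laws_eq:
  fixes X V \<eta> :: "nat \<Rightarrow> 'w \<Rightarrow> real" and \<mu> :: "nat \<Rightarrow> real measure"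
  assumes ab: "0 \<le> a" "a \<le> b" "0 < b"
    and X: "\<And>i w. i \<ge> 1 \<Longrightarrow> X i w = V i w * \<eta> i w"
    and V: "\<And>i. i \<ge> 1 \<Longrightarrow> maximal_dist P (V i) a b" "\<And>i. i \<ge> 1 \<Longrightarrow> V i \<in> borel_measurable M"
    and \<eta>: "\<And>i. i \<ge> 1 \<Longrightarrow> classical_dist P (\<eta> i) (\<mu> i) \<and> standardized (\<mu> i)"
      "\<And>i. i \<ge> 1 \<Longrightarrow> \<eta> i \<in> borel_measurable M"
    and V_\<eta>: "\<And>i. i \<ge> 1 \<Longrightarrow> sl_indep P [V i] [\<eta> i]"
    and ident: "\<And>i \<phi>. i \<ge> 1 \<Longrightarrow> bLip1 \<phi> \<Longrightarrow> sexp P (\<lambda>w. \<phi> (X i w)) = sexp P (\<lambda>w. \<phi> (X 1 w))"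
    and i: "i \<ge> 1"
  shows "\<mu> i = \<mu> 1"
proof -
  have \<mu>: "prob_space (\<mu> j)" "sets (\<mu> j) = sets borel" "integrable (\<mu> j) (\<lambda>x. x^2)" "(\<integral>x. x^2 \<partial>\<mu> j) = 1"
    if "j \<ge> 1" for j
    using \<eta>(1)[OF that] unfolding classical_dist_def standardized_def by auto
  have X_meas: "X j \<in> borel_measurable M" if "j \<ge> 1" for j
  proof -
    have "X j = (\<lambda>w. V j w * \<eta> j w)"
      using X[OF that] by auto
    then show ?thesis
      using V(2)[OF that] \<eta>(2)[OF that] by simp
  qed
  have one: "1 \<le> (1::nat)"
    by simp
  show ?thesis
  proof (rule law_eq_of_upper_scale_integral_eq[OF \<mu>[OF i] \<mu>[OF one] ab])
    fix \<psi> :: "real \<Rightarrow> real" and B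
    assume \<psi>: "continuous_on UNIV \<psi>" "\<And>x. \<bar>\<psi> x\<bar> \<le> B"
    have "sexp P (\<lambda>w. \<psi> (X j w)) = upper_scale_integral a b (\<mu> j) \<psi>" if "j \<ge> 1" for j
      using sexp_maximal_times_classical[OF sle V(1)[OF that] V(2)[OF that] ab(2) _ \<eta>(2)[OF that] V_\<eta>[OF that] \<psi>]
        \<eta>(1)[OF that] X[OF that] by simp
    then show "upper_scale_integral a b (\<mu> i) \<psi> = upper_scale_integral a b (\<mu> 1) \<psi>"
      using sexp_eq_of_bLip1_eq[OF sle X_meas[OF i] X_meas[OF one] ident[OF i] \<psi>] i by simp
  qed
qed

lemma upper_weighted_sum_integral_semiG_tendsto:
  fixes X V \<eta> :: "nat \<Rightarrow> 'w \<Rightarrow> real" and \<mu> :: "nat \<Rightarrow> real measure"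
  assumes ab: "0 \<le> a" "a \<le> b"
    and X: "\<And>i w. i \<ge> 1 \<Longrightarrow> X i w = V i w * \<eta> i w"
    and V: "\<And>i. i \<ge> 1 \<Longrightarrow> maximal_dist P (V i) a b" "\<And>i. i \<ge> 1 \<Longrightarrow> V i \<in> borel_measurable M"
    and \<eta>: "\<And>i. i \<ge> 1 \<Longrightarrow> classical_dist P (\<eta> i) (\<mu> i) \<and> standardized (\<mu> i)"
      "\<And>i. i \<ge> 1 \<Longrightarrow> \<eta> i \<in> borel_measurable M"
    and V_\<eta>: "\<And>i. i \<ge> 1 \<Longrightarrow> sl_indep P [V i] [\<eta> i]"
    and ident: "\<And>i \<phi>. i \<ge> 1 \<Longrightarrow> bLip1 \<phi> \<Longrightarrow> sexp P (\<lambda>w. \<phi> (X i w)) = sexp P (\<lambda>w. \<phi> (X 1 w))"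
    and fc: "continuous_on UNIV \<phi>" and fB: "\<And>x. \<bar>\<phi> x\<bar> \<le> B"
  shows "upper_weighted_sum_integral a b (\<lambda>j. \<mu> (j+1)) \<phi> \<longlonglongrightarrow> upper_scale_integral a b std_normal_distribution \<phi>"
proof (cases "b = 0")
  case True
  then have "a = 0" using ab by simp
  have "upper_weighted_sum_integral 0 0 (\<lambda>j. \<mu> (j+1)) \<phi> = (\<lambda>n. \<phi> 0)"
    using \<eta>(1) unfolding classical_dist_def by (intro ext upper_weighted_sum_integral_zero) simp
  moreover have "upper_scale_integral 0 0 std_normal_distribution \<phi> = \<phi> 0"
    by (rule upper_scale_integral_zero) (simp add: prob_space_normal_density)
  ultimately show ?thesis
    using True \<open>a = 0\<close> by simp
next
  case False
  then have b: "0 < b"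
    using ab by simp
  have "\<mu> (j+1) = \<mu> 1" for j
    by (rule classical_laws_eq[where X=X and V=V and \<eta>=\<eta> and \<mu>=\<mu>, OF ab b X V \<eta> V_\<eta> ident]) auto
  then have laws: "(\<lambda>j. \<mu> (j+1)) = (\<lambda>_. \<mu> 1)"
    by (rule ext)
  have "real_distribution (\<mu> 1)" "integrable (\<mu> 1) (\<lambda>x. x)" "integrable (\<mu> 1) (\<lambda>x. x^2)"
    "(\<integral>x. x \<partial>\<mu> 1) = 0" "(\<integral>x. x^2 \<partial>\<mu> 1) = 1"
    using \<eta>(1)[of 1] unfolding classical_dist_def standardized_def real_distribution_def
      real_distribution_axioms_def by auto
  then show ?thesis
    unfolding laws by (rule upper_weighted_sum_integral_tendsto[OF _ _ _ _ _ ab fc fB])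
qed

end

theorem mainTheorem2:
  fixes M :: "'w measure" and P :: "'w measure set"
    and X V \<eta> :: "nat \<Rightarrow> 'w \<Rightarrow> real" and \<mu> :: "nat \<Rightarrow> real measure"
    and W :: "'w \<Rightarrow> real" and sl su :: real
  assumes space: "sle_space M P"
    and sig: "0 \<le> sl" "sl \<le> su"
    and meas: "\<And>i. i \<ge> 1 \<Longrightarrow> V i \<in> borel_measurable M"
              "\<And>i. i \<ge> 1 \<Longrightarrow> \<eta> i \<in> borel_measurable M"
              "W \<in> borel_measurable M"
    and prod: "\<And>i w. i \<ge> 1 \<Longrightarrow> X i w = V i w * \<eta> i w"
    and Vdist: "\<And>i. i \<ge> 1 \<Longrightarrow> maximal_dist P (V i) sl su"
    and etadist: "\<And>i. i \<ge> 1 \<Longrightarrow> classical_dist P (\<eta> i) (\<mu> i) \<and> standardized (\<mu> i)"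
    and Veta: "\<And>i. i \<ge> 1 \<Longrightarrow> sl_indep P [V i] [\<eta> i]"
    and ident: "\<And>i \<phi>. i \<ge> 1 \<Longrightarrow> bLip1 \<phi> \<Longrightarrow>
                  sexp P (\<lambda>w. \<phi> (X i w)) = sexp P (\<lambda>w. \<phi> (X 1 w))"
    and semiG_indep: "\<And>n. n \<ge> 1 \<Longrightarrow>
          sl_indep P (map V [1..<n+1]) (map \<eta> [1..<n+1]) \<and>
          (\<forall>i. 1 \<le> i \<and> i < n \<longrightarrow> sl_indep P (map V [1..<i+1]) [V (i+1)]) \<and>
          classical_indep P (map \<eta> [1..<n+1]) (\<lambda>j. \<mu> (j+1))"
    and mean: "sexp P (X 1) = 0" "- sexp P (\<lambda>w. - X 1 w) = 0"
    and var: "- sexp P (\<lambda>w. -((X 1 w)^2)) = sl^2" "sexp P (\<lambda>w. (X 1 w)^2) = su^2"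
    and Wdist: "semiG_normal M P W sl su"
  shows "\<forall>\<phi>::real \<Rightarrow> real. continuous_on UNIV \<phi> \<and> bounded (range \<phi>) \<longrightarrow>
           (\<lambda>n. sexp P (\<lambda>w. \<phi> ((\<Sum>i=1..n. X i w) / sqrt (real n))))
             \<longlonglongrightarrow> sexp P (\<lambda>w. \<phi> (W w))"
proof (intro allI impI)
  fix \<phi> :: "real \<Rightarrow> real"
  assume "continuous_on UNIV \<phi> \<and> bounded (range \<phi>)"
  then obtain B where fc: "continuous_on UNIV \<phi>" and fB: "\<And>x. \<bar>\<phi> x\<bar> \<le> B"
    unfolding bounded_iff by auto
  have "\<forall>\<^sub>F n in sequentially. upper_weighted_sum_integral sl su (\<lambda>j. \<mu> (j+1)) \<phi> n =
      sexp P (\<lambda>w. \<phi> ((\<Sum>i=1..n. X i w) / sqrt (real n)))"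
    using eventually_ge_at_top[of 1]
    by eventually_elim
       (rule sexp_normalized_sum[where X=X and V=V and \<eta>=\<eta> and \<mu>=\<mu>, OF space sig(2)
          prod Vdist meas(1) etadist[THEN conjunct1] meas(2) semiG_indep _ fc fB, symmetric])
  moreover have "upper_weighted_sum_integral sl su (\<lambda>j. \<mu> (j+1)) \<phi> \<longlonglongrightarrow> sexp P (\<lambda>w. \<phi> (W w))"
    using upper_weighted_sum_integral_semiG_tendsto[where X=X and V=V and \<eta>=\<eta> and \<mu>=\<mu>,
        OF space sig prod Vdist meas(1) etadist meas(2) Veta ident fc fB]
      sexp_semiG_normal[OF space Wdist sig(2) fc fB]
    by simp
  ultimately show "(\<lambda>n. sexp P (\<lambda>w. \<phi> ((\<Sum>i=1..n. X i w) / sqrt (real n))))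
      \<longlonglongrightarrow> sexp P (\<lambda>w. \<phi> (W w))"
    by (rule Lim_transform_eventually[rotated])
qed

end
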